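(* Let $(V_1, V_2)$ be an irreducible $3$-finite pair on $\mathcal{H}$. Then: (1) $\operatorname{rank}[V_2^*, V_1] = 1$ and $\operatorname{ran}[V_2^*, V_1] = E_1$; (2) $E_{-1} = \{0\}$; (3) there exist a unique $\beta \in \mathbb{C}\setminus\{0\}$ and a unit vector $f \in E_1$ such that $E_1 = \mathbb{C} f$ and $[V_2^*, V_1] f = \beta f$; (4) there is a unique $\lambda \in (0,1)$ such that $\sigma(C(V_1, V_2)) \cap (0,1) = \{\lambda\}$, and the restriction of $C(V_1,V_2)$ to $(\ker C(V_1,V_2))^\perp$ is unitarily equivalent to the diagonal matrix $\operatorname{diag}(1, \lambda, -\lambda)$ on $\mathbb{C}^3$; (5) $|\beta| = \lambda$.
   Context: All Hilbert spaces are complex and separable. An isometric pair is a pair $(V_1,V_2)$ of commuting isometries on $\mathcal{H}$. An isometry $V$ is a shift if $V^{*m}\to0$ strongly. A BCL pair is an isometric pair with $V_1V_2$ a shift. $[V_2^*,V_1] := V_2^*V_1 - V_1V_2^*$. A compact normal pair is a BCL pair with $[V_2^*,V_1]$ compact and normal. $C(V_1,V_2) := I - V_1V_1^* - V_2V_2^* + V_1V_2V_1^*V_2^*$ and $E_\mu := \ker(C(V_1,V_2)-\mu I)$. A $3$-finite pair is a compact normal pair with $\operatorname{rank} C(V_1,V_2)=3$. Irreducible: no closed subspace other than $\{0\}$ and $\mathcal{H}$ invariant under $V_1,V_2,V_1^*,V_2^*$. *)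

theory Defs
  imports "HOL-Analysis.Analysis"
begin

text \<open>The library only has real inner product spaces, so we introduce complex ones.
  Convention: the inner product is conjugate-linear in the first argument.\<close>

class complex_inner = real_normed_vector +
  fixes scaleC :: "complex \<Rightarrow> 'a \<Rightarrow> 'a" (infixr "*\<^sub>C" 75)
  fixes cinner :: "'a \<Rightarrow> 'a \<Rightarrow> complex"
  assumes scaleR_scaleC: "scaleR r x = scaleC (complex_of_real r) x"
  assumes scaleC_add_right: "a *\<^sub>C (x + y) = a *\<^sub>C x + a *\<^sub>C y"
  assumes scaleC_add_left: "(a + b) *\<^sub>C x = a *\<^sub>C x + b *\<^sub>C x"
  assumes scaleC_scaleC: "a *\<^sub>C (b *\<^sub>C x) = (a * b) *\<^sub>C x"
  assumes scaleC_one: "1 *\<^sub>C x = x"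
  assumes cinner_commute: "cinner x y = cnj (cinner y x)"
  assumes cinner_add_left: "cinner (x + y) z = cinner x z + cinner y z"
  assumes cinner_scaleC_left: "cinner (a *\<^sub>C x) y = cnj a * cinner x y"
  assumes cinner_ge_zero: "0 \<le> Re (cinner x x)"
  assumes cinner_eq_zero_iff: "cinner x x = 0 \<longleftrightarrow> x = 0"
  assumes norm_eq_sqrt_cinner: "norm x = sqrt (Re (cinner x x))"

class chilbert = complex_inner + complete_space

definition separable_space :: "'a::topological_space itself \<Rightarrow> bool" where
  "separable_space _ \<longleftrightarrow> (\<exists>D::'a set. countable D \<and> closure D = UNIV)"

global_interpretation cvs: vector_space "scaleC :: complex \<Rightarrow> 'a::complex_inner \<Rightarrow> 'a"
  by unfold_locales (simp_all add: scaleC_add_right scaleC_add_left scaleC_scaleC scaleC_one)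

definition clinear :: "('a::complex_inner \<Rightarrow> 'b::complex_inner) \<Rightarrow> bool" where
  "clinear T \<longleftrightarrow> (\<forall>x y. T (x + y) = T x + T y) \<and> (\<forall>a x. T (a *\<^sub>C x) = a *\<^sub>C T x)"

definition bounded_clinear :: "('a::complex_inner \<Rightarrow> 'b::complex_inner) \<Rightarrow> bool" where
  "bounded_clinear T \<longleftrightarrow> clinear T \<and> (\<exists>K. \<forall>x. norm (T x) \<le> norm x * K)"

definition adj :: "('a::complex_inner \<Rightarrow> 'a) \<Rightarrow> 'a \<Rightarrow> 'a" where
  "adj T = (\<lambda>y. THE z. \<forall>x. cinner (T x) y = cinner x z)"

definition isometry :: "('a::complex_inner \<Rightarrow> 'a) \<Rightarrow> bool" where
  "isometry V \<longleftrightarrow> bounded_clinear V \<and> (\<forall>x. norm (V x) = norm x)"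

definition is_shift :: "('a::complex_inner \<Rightarrow> 'a) \<Rightarrow> bool" where
  "is_shift V \<longleftrightarrow> isometry V \<and> (\<forall>x. (\<lambda>m. (adj V ^^ m) x) \<longlonglongrightarrow> 0)"

definition isometric_pair :: "('a::complex_inner \<Rightarrow> 'a) \<Rightarrow> ('a \<Rightarrow> 'a) \<Rightarrow> bool" where
  "isometric_pair V1 V2 \<longleftrightarrow> isometry V1 \<and> isometry V2 \<and> V1 \<circ> V2 = V2 \<circ> V1"

definition BCL_pair :: "('a::complex_inner \<Rightarrow> 'a) \<Rightarrow> ('a \<Rightarrow> 'a) \<Rightarrow> bool" where
  "BCL_pair V1 V2 \<longleftrightarrow> isometric_pair V1 V2 \<and> is_shift (V1 \<circ> V2)"

definition cross_comm :: "('a::complex_inner \<Rightarrow> 'a) \<Rightarrow> ('a \<Rightarrow> 'a) \<Rightarrow> 'a \<Rightarrow> 'a" where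
  "cross_comm V1 V2 = (\<lambda>x. adj V2 (V1 x) - V1 (adj V2 x))"

definition compact_op :: "('a::complex_inner \<Rightarrow> 'a) \<Rightarrow> bool" where
  "compact_op T \<longleftrightarrow> bounded_clinear T \<and> compact (closure (T ` {x. norm x \<le> 1}))"

definition normal_op :: "('a::complex_inner \<Rightarrow> 'a) \<Rightarrow> bool" where
  "normal_op T \<longleftrightarrow> bounded_clinear T \<and> T \<circ> adj T = adj T \<circ> T"

definition compact_normal_pair :: "('a::complex_inner \<Rightarrow> 'a) \<Rightarrow> ('a \<Rightarrow> 'a) \<Rightarrow> bool" where
  "compact_normal_pair V1 V2 \<longleftrightarrow> BCL_pair V1 V2 \<and> compact_op (cross_comm V1 V2)
      \<and> normal_op (cross_comm V1 V2)"

definition defect_op :: "('a::complex_inner \<Rightarrow> 'a) \<Rightarrow> ('a \<Rightarrow> 'a) \<Rightarrow> 'a \<Rightarrow> 'a" where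
  "defect_op V1 V2 = (\<lambda>x. x - V1 (adj V1 x) - V2 (adj V2 x) + V1 (V2 (adj V1 (adj V2 x))))"

definition eigsp :: "('a::complex_inner \<Rightarrow> 'a) \<Rightarrow> complex \<Rightarrow> 'a set" where
  "eigsp T \<mu> = {x. T x = \<mu> *\<^sub>C x}"

definition E_sp :: "('a::complex_inner \<Rightarrow> 'a) \<Rightarrow> ('a \<Rightarrow> 'a) \<Rightarrow> complex \<Rightarrow> 'a set" where
  "E_sp V1 V2 \<mu> = eigsp (defect_op V1 V2) \<mu>"

text \<open>Rank = complex dimension of the range (a finite rank \<open>n > 0\<close> forces a finite basis).\<close>
definition op_rank :: "('a::complex_inner \<Rightarrow> 'a) \<Rightarrow> nat" where
  "op_rank T = cvs.dim (range T)"

definition three_finite_pair :: "('a::complex_inner \<Rightarrow> 'a) \<Rightarrow> ('a \<Rightarrow> 'a) \<Rightarrow> bool" where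
  "three_finite_pair V1 V2 \<longleftrightarrow> compact_normal_pair V1 V2 \<and> op_rank (defect_op V1 V2) = 3"

definition irreducible_pair :: "('a::complex_inner \<Rightarrow> 'a) \<Rightarrow> ('a \<Rightarrow> 'a) \<Rightarrow> bool" where
  "irreducible_pair V1 V2 \<longleftrightarrow>
     (\<forall>M. closed M \<and> cvs.subspace M \<and> V1 ` M \<subseteq> M \<and> V2 ` M \<subseteq> M
          \<and> adj V1 ` M \<subseteq> M \<and> adj V2 ` M \<subseteq> M \<longrightarrow> M = {0} \<or> M = UNIV)"

definition op_spectrum :: "('a::complex_inner \<Rightarrow> 'a) \<Rightarrow> complex set" where
  "op_spectrum T = {z. \<not> (\<exists>S. bounded_clinear S \<and> (\<forall>x. S (T x - z *\<^sub>C x) = x)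
                                 \<and> (\<forall>y. T (S y) - z *\<^sub>C S y = y))}"

definition orth_compl :: "'a::complex_inner set \<Rightarrow> 'a set" where
  "orth_compl S = {x. \<forall>y\<in>S. cinner y x = 0}"

definition op_kernel :: "('a::complex_inner \<Rightarrow> 'a) \<Rightarrow> 'a set" where
  "op_kernel T = {x. T x = 0}"

definition cinner3 :: "complex^3 \<Rightarrow> complex^3 \<Rightarrow> complex" where
  "cinner3 x y = (\<Sum>i\<in>UNIV. cnj (x $ i) * y $ i)"

definition diag3 :: "complex \<Rightarrow> complex \<Rightarrow> complex \<Rightarrow> complex^3^3" where
  "diag3 a b c = (\<chi> i j. if i = j then (if i = 1 then a else if i = 2 then b else c) else 0)"

definition unitarily_equiv_restr :: "('a::complex_inner \<Rightarrow> 'a) \<Rightarrow> 'a set \<Rightarrow> complex^3^3 \<Rightarrow> bool" where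
  "unitarily_equiv_restr T K D \<longleftrightarrow> T ` K \<subseteq> K \<and>
     (\<exists>U :: 'a \<Rightarrow> complex^3.
        (\<forall>x\<in>K. \<forall>y\<in>K. \<forall>a. U (a *\<^sub>C x + y) = a *s U x + U y)
      \<and> (\<forall>x\<in>K. \<forall>y\<in>K. cinner3 (U x) (U y) = cinner x y)
      \<and> U ` K = UNIV
      \<and> (\<forall>x\<in>K. U (T x) = D *v U x))"

end

theory Submission
  imports Defs "HOL-Computational_Algebra.Fundamental_Theorem_Algebra"
begin

text \<open>The range of \<open>X = [V\<^sub>2\<^sup>*, V\<^sub>1]\<close> lies in \<open>E\<^sub>1 = ker V\<^sub>1\<^sup>* \<inter> ker V\<^sub>2\<^sup>*\<close>, which is
  finite-dimensional since it lies in the range of \<open>C = C(V\<^sub>1, V\<^sub>2)\<close>, and is nonzero since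
  \<open>C \<noteq> 0\<close>; so \<open>X\<close> has a unit eigenvector \<open>f \<in> E\<^sub>1\<close>, \<open>X f = \<beta> f\<close>, and by normality
  \<open>X\<^sup>* f = \<beta>\<^sup>* f\<close>. By irreducibility the orbit \<open>V\<^sub>1\<^sup>m V\<^sub>2\<^sup>n f\<close> is total, and the self-adjoint
  operator \<open>C\<close> kills it except for \<open>C f = f\<close>, \<open>C V\<^sub>1 f = -\<beta> V\<^sub>2 f\<close>, \<open>C V\<^sub>2 f = -\<beta>\<^sup>* V\<^sub>1 f\<close>.
  This determines \<open>C\<close>: rank \<open>3\<close> forces \<open>0 < |\<beta>| < 1\<close>, and then
  \<open>C = P\<^sub>f + |\<beta>| P\<^bsub>u\<^sub>1\<^esub> - |\<beta>| P\<^bsub>u\<^sub>2\<^esub>\<close> for an orthonormal triple \<open>f, u\<^sub>1, u\<^sub>2\<close> built from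
  \<open>V\<^sub>1 f\<close> and \<open>V\<^sub>2 f\<close>, from which every claim is read off.\<close>

lemma cinner_add_right: "cinner x (y + z) = cinner x y + cinner x z"
  for x y z :: "'a::complex_inner"
  by (metis cinner_add_left cinner_commute complex_cnj_add)

lemma cinner_scaleC_right: "cinner x (a *\<^sub>C y) = a * cinner x y"
  for x y :: "'a::complex_inner"
  by (metis cinner_commute cinner_scaleC_left complex_cnj_cnj complex_cnj_mult)

lemma cinner_zero_left [simp]: "cinner 0 x = 0"
  for x :: "'a::complex_inner"
  by (metis add_cancel_right_right cinner_add_left)

lemma cinner_zero_right [simp]: "cinner x 0 = 0"
  for x :: "'a::complex_inner"
  by (metis cinner_commute cinner_zero_left complex_cnj_zero)

lemma cinner_minus_left: "cinner (- x) y = - cinner x y"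
  for x y :: "'a::complex_inner"
  by (metis add.right_inverse add_eq_0_iff cinner_add_left cinner_zero_left)

lemma cinner_minus_right: "cinner x (- y) = - cinner x y"
  for x y :: "'a::complex_inner"
  by (metis add.right_inverse add_eq_0_iff cinner_add_right cinner_zero_right)

lemma cinner_diff_left: "cinner (x - y) z = cinner x z - cinner y z"
  for x y z :: "'a::complex_inner"
  by (simp only: diff_conv_add_uminus cinner_add_left cinner_minus_left)

lemma cinner_diff_right: "cinner x (y - z) = cinner x y - cinner x z"
  for x y z :: "'a::complex_inner"
  by (simp only: diff_conv_add_uminus cinner_add_right cinner_minus_right)

lemma cinner_self: "cinner x x = complex_of_real ((norm x)\<^sup>2)"
  for x :: "'a::complex_inner"
proof -
  have "Im (cinner x x) = 0"
    by (metis Reals_cnj_iff cinner_commute complex_is_Real_iff)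
  then show ?thesis
    by (simp add: complex_eq_iff norm_eq_sqrt_cinner cinner_ge_zero)
qed

lemma power2_norm_eq_cinner: "(norm x)\<^sup>2 = Re (cinner x x)"
  for x :: "'a::complex_inner"
  by (simp add: cinner_self)

lemmas cinner_simps = cinner_add_left cinner_add_right cinner_diff_left cinner_diff_right
  cinner_scaleC_left cinner_scaleC_right cinner_minus_left cinner_minus_right

lemma cinner_scaleR_left: "cinner (r *\<^sub>R x) y = complex_of_real r * cinner x y"
  for x y :: "'a::complex_inner"
  by (simp add: scaleR_scaleC cinner_scaleC_left)

lemma norm_scaleC: "norm (a *\<^sub>C x) = cmod a * norm x"
  for x :: "'a::complex_inner"
proof -
  have "cinner (a *\<^sub>C x) (a *\<^sub>C x) = complex_of_real ((cmod a)\<^sup>2) * cinner x x"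
    by (simp add: cinner_scaleC_left cinner_scaleC_right mult_ac flip: complex_norm_square)
  then have "(norm (a *\<^sub>C x))\<^sup>2 = (cmod a * norm x)\<^sup>2"
    by (simp add: power2_norm_eq_cinner power_mult_distrib)
  then show ?thesis
    by simp
qed

lemma power2_norm_add_cinner:
  "(norm (x + y))\<^sup>2 = (norm x)\<^sup>2 + (norm y)\<^sup>2 + 2 * Re (cinner x y)"
  for x y :: "'a::complex_inner"
  using cinner_commute[of y x] by (simp add: power2_norm_eq_cinner cinner_simps)

lemma power2_norm_diff_cinner:
  "(norm (x - y))\<^sup>2 = (norm x)\<^sup>2 + (norm y)\<^sup>2 - 2 * Re (cinner x y)"
  for x y :: "'a::complex_inner"
  using cinner_commute[of y x] by (simp add: power2_norm_eq_cinner cinner_simps)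

lemma cinner_extensionality:
  fixes a b :: "'a::complex_inner"
  assumes "\<And>z. cinner z a = cinner z b"
  shows "a = b"
proof -
  have "cinner (a - b) (a - b) = 0"
    using assms[of "a - b"] by (simp add: cinner_diff_right)
  then show ?thesis
    by (simp add: cinner_eq_zero_iff)
qed

lemma power2_norm_diff_projection:
  fixes u x :: "'a::complex_inner"
  assumes "u \<noteq> 0"
  shows "(norm (x - (cinner u x / complex_of_real ((norm u)\<^sup>2)) *\<^sub>C u))\<^sup>2
    = (norm x)\<^sup>2 - (cmod (cinner u x))\<^sup>2 / (norm u)\<^sup>2"
proof -
  define p where "p = cinner u x"
  define n where "n = (norm u)\<^sup>2"
  have n: "n > 0"
    using assms by (simp add: n_def)
  have "cinner x u = cnj p"
    by (simp add: p_def cinner_commute[of x u])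
  then have t: "p / complex_of_real n * cinner x u = complex_of_real ((cmod p)\<^sup>2 / n)"
    by (simp add: field_simps flip: complex_norm_square)
  have "cmod (p / complex_of_real n) = cmod p / n"
    using n by (simp add: norm_divide)
  then have tu: "(cmod (p / complex_of_real n) * norm u)\<^sup>2 = (cmod p)\<^sup>2 / n"
    using n by (simp add: power_mult_distrib power_divide n_def power2_eq_square)
  have "(norm (x - (p / complex_of_real n) *\<^sub>C u))\<^sup>2
      = (norm x)\<^sup>2 + (cmod (p / complex_of_real n) * norm u)\<^sup>2
        - 2 * Re (p / complex_of_real n * cinner x u)"
    by (simp only: power2_norm_diff_cinner norm_scaleC cinner_scaleC_right)
  also have "\<dots> = (norm x)\<^sup>2 - (cmod p)\<^sup>2 / n"
    unfolding t tu Re_complex_of_real by simp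
  finally show ?thesis
    by (simp only: p_def n_def)
qed

lemma cmod_cinner_le: "cmod (cinner x y) \<le> norm x * norm y"
  for x y :: "'a::complex_inner"
proof (cases "x = 0")
  case False
  have "(cmod (cinner x y))\<^sup>2 / (norm x)\<^sup>2 \<le> (norm y)\<^sup>2"
    using zero_le_power2[of "norm (y - (cinner x y / complex_of_real ((norm x)\<^sup>2)) *\<^sub>C x)"]
    unfolding power2_norm_diff_projection[OF False] by simp
  then have "(cmod (cinner x y))\<^sup>2 \<le> (norm x * norm y)\<^sup>2"
    using False by (simp add: divide_le_eq power_mult_distrib mult.commute)
  then show ?thesis
    by (rule power2_le_imp_le) simp
qed simp

lemma cinner_eq_0_if_nearest:
  fixes r u :: "'a::complex_inner"
  assumes "\<And>t. norm r \<le> norm (r - t *\<^sub>C u)"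
  shows "cinner u r = 0"
proof (cases "u = 0")
  case False
  have "(norm r)\<^sup>2 \<le> (norm (r - (cinner u r / complex_of_real ((norm u)\<^sup>2)) *\<^sub>C u))\<^sup>2"
    by (rule power_mono[OF assms norm_ge_zero])
  also have "\<dots> = (norm r)\<^sup>2 - (cmod (cinner u r))\<^sup>2 / (norm u)\<^sup>2"
    by (rule power2_norm_diff_projection[OF False])
  finally have "(cmod (cinner u r))\<^sup>2 / (norm u)\<^sup>2 \<le> 0" by linarith
  then show ?thesis
    using False by (simp add: divide_le_0_iff)
qed simp

lemma bounded_linear_cinner_left: "bounded_linear (\<lambda>x. cinner x w)"
  for w :: "'a::complex_inner"
proof (rule bounded_linear_intro[where K="norm w"])
  show "cinner (r *\<^sub>R x) w = r *\<^sub>R cinner x w" for r x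
    by (simp add: scaleR_scaleC cinner_scaleC_left scaleR_conv_of_real)
  show "norm (cinner x w) \<le> norm x * norm w" for x
    using cmod_cinner_le[of x w] by simp
qed (rule cinner_add_left)

lemma csubspace_closure:
  fixes S :: "'a::complex_inner set"
  assumes S: "cvs.subspace S"
  shows "cvs.subspace (closure S)"
proof (rule cvs.subspaceI)
  show "0 \<in> closure S"
    using cvs.subspace_0[OF S] closure_subset by blast
  show "x + y \<in> closure S" if xy: "x \<in> closure S" "y \<in> closure S" for x y
  proof -
    obtain a b where "\<forall>n. a n \<in> S" "a \<longlonglongrightarrow> x" "\<forall>n. b n \<in> S" "b \<longlonglongrightarrow> y"
      using xy unfolding closure_sequential by blast
    then show ?thesis
      unfolding closure_sequential
      by (intro exI[of _ "\<lambda>n. a n + b n"]) (auto intro: tendsto_add cvs.subspace_add[OF S])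
  qed
  show "c *\<^sub>C x \<in> closure S" if x: "x \<in> closure S" for c x
  proof -
    have scale: "bounded_linear (\<lambda>x::'a. c *\<^sub>C x)"
      by (rule bounded_linear_intro[where K="cmod c"])
        (simp_all add: scaleC_add_right scaleR_scaleC norm_scaleC mult.commute)
    obtain a where "\<forall>n. a n \<in> S" "a \<longlonglongrightarrow> x"
      using x unfolding closure_sequential by blast
    then show ?thesis
      unfolding closure_sequential
      by (intro exI[of _ "\<lambda>n. c *\<^sub>C a n"])
        (auto intro: bounded_linear.tendsto[OF scale] cvs.subspace_scale[OF S])
  qed
qed

lemma
  assumes "clinear T"
  shows clinear_add: "T (x + y) = T x + T y"
    and clinear_scaleC: "T (a *\<^sub>C x) = a *\<^sub>C T x"
    and clinear_zero: "T 0 = 0"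
    and clinear_minus: "T (- x) = - T x"
    and clinear_diff: "T (x - y) = T x - T y"
    and clinear_scaleR: "T (r *\<^sub>R x) = r *\<^sub>R T x"
proof -
  show add: "T (x + y) = T x + T y" for x y
    using assms by (simp add: clinear_def)
  show "T (a *\<^sub>C x) = a *\<^sub>C T x"
    using assms by (simp add: clinear_def)
  show zero: "T 0 = 0"
    using add[of 0 0] by simp
  show minus: "T (- x) = - T x" for x
    using add[of "- x" x] zero by (simp add: eq_neg_iff_add_eq_0)
  show "T (x - y) = T x - T y"
    by (simp only: diff_conv_add_uminus add minus)
  show "T (r *\<^sub>R x) = r *\<^sub>R T x"
    using assms by (simp add: clinear_def scaleR_scaleC)
qed

lemmas clinear_simps = clinear_add clinear_scaleC clinear_zero clinear_minus clinear_diff clinear_scaleR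

lemma eigenvector_sgn_iff:
  assumes "clinear T" "x \<noteq> 0"
  shows "T (sgn x) = a *\<^sub>C sgn x \<longleftrightarrow> T x = a *\<^sub>C x"
proof -
  have "T (sgn x) = inverse (norm x) *\<^sub>R T x"
    by (simp add: sgn_div_norm clinear_scaleR[OF assms(1)])
  moreover have "a *\<^sub>C sgn x = inverse (norm x) *\<^sub>R (a *\<^sub>C x)"
    by (simp add: sgn_div_norm scaleR_scaleC mult.commute)
  ultimately show ?thesis
    using assms(2) by simp
qed

lemma bounded_clinear_imp_bounded_linear:
  assumes "bounded_clinear T"
  shows "bounded_linear T"
proof -
  obtain K where K: "\<And>x. norm (T x) \<le> norm x * K" and lin: "clinear T"
    using assms unfolding bounded_clinear_def by blast
  show ?thesis
    by (rule bounded_linear_intro[where K=K])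
      (simp_all add: K clinear_add[OF lin] clinear_scaleR[OF lin])
qed

lemma clinear_isometry: "isometry V \<Longrightarrow> clinear V"
  by (simp add: isometry_def bounded_clinear_def)

lemma bounded_linear_isometry: "isometry V \<Longrightarrow> bounded_linear V"
  by (simp add: isometry_def bounded_clinear_imp_bounded_linear)

lemma closure_span_invariant:
  fixes T :: "'a::complex_inner \<Rightarrow> 'a"
  assumes T: "bounded_linear T" "clinear T" and G: "\<And>g. g \<in> G \<Longrightarrow> T g \<in> cvs.span G"
  shows "T ` closure (cvs.span G) \<subseteq> closure (cvs.span G)"
proof -
  have "T x \<in> cvs.span G" if "x \<in> cvs.span G" for x
    using that
  proof (induction rule: cvs.span_induct)
    case base
    then show ?case
      by (rule cvs.subspaceI) (simp_all add: clinear_simps[OF T(2)] cvs.span_zero cvs.span_add cvs.span_scale)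
  qed (use G in auto)
  then show ?thesis
    by (intro image_closure_subset[OF linear_continuous_on[OF T(1)] closed_closure])
      (use closure_subset in blast)
qed

lemma norm_isometry: "isometry V \<Longrightarrow> norm (V x) = norm x"
  by (simp add: isometry_def)

lemma cinner_isometry:
  assumes V: "isometry V"
  shows "cinner (V x) (V y) = cinner x y"
proof -
  note lin = clinear_isometry[OF V]
  have Re: "Re (cinner (V x) (V y)) = Re (cinner x y)" for x y
    using power2_norm_add_cinner[of x y] power2_norm_add_cinner[of "V x" "V y"]
    by (simp add: clinear_add[OF lin, symmetric] norm_isometry[OF V])
  have "Im (cinner x y) = - Re (cinner x (\<i> *\<^sub>C y))" for x y :: 'a
    by (simp add: cinner_scaleC_right)
  then have "Im (cinner (V x) (V y)) = Im (cinner x y)"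
    using Re[of x "\<i> *\<^sub>C y"] by (simp add: clinear_scaleC[OF lin])
  with Re[of x y] show ?thesis
    by (simp add: complex_eq_iff)
qed

lemma Cauchy_if_power2_norm_diff_le:
  fixes xs :: "nat \<Rightarrow> 'a::real_normed_vector"
  assumes close: "\<And>m n. (norm (xs m - xs n))\<^sup>2 \<le> 2 * inverse (real (Suc m)) + 2 * inverse (real (Suc n))"
  shows "Cauchy xs"
proof (rule CauchyI)
  fix e :: real
  assume e: "0 < e"
  have e2: "0 < e\<^sup>2"
    using e by simp
  obtain M :: nat where "4 / e\<^sup>2 < real M"
    using reals_Archimedean2 by blast
  then have "4 < real M * e\<^sup>2"
    using e2 by (simp add: pos_divide_less_eq)
  also have "\<dots> < real (Suc M) * e\<^sup>2"
    using e2 by simp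
  finally have M: "4 * inverse (real (Suc M)) < e\<^sup>2"
    by (simp add: field_simps)
  show "\<exists>M. \<forall>m\<ge>M. \<forall>n\<ge>M. norm (xs m - xs n) < e"
  proof (intro exI allI impI)
    fix m n
    assume "M \<le> m" "M \<le> n"
    then have "inverse (real (Suc m)) \<le> inverse (real (Suc M))"
      "inverse (real (Suc n)) \<le> inverse (real (Suc M))"
      by (simp_all add: le_imp_inverse_le)
    then have "(norm (xs m - xs n))\<^sup>2 < e\<^sup>2"
      using close[of m n] M by linarith
    then show "norm (xs m - xs n) < e"
      using e by (simp add: power_less_imp_less_base)
  qed
qed

text \<open>Parallelogram law for \<open>y - V x\<^sub>1\<close> and \<open>y - V x\<^sub>2\<close>, whose mean is \<open>y - V\<close> of the mean.\<close>
lemma isometry_power2_norm_diff_le: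
  fixes V :: "'a::complex_inner \<Rightarrow> 'a"
  assumes V: "isometry V" and d: "\<And>z. d \<le> (norm (y - V z))\<^sup>2"
  shows "(norm (x1 - x2))\<^sup>2 \<le> 2 * (norm (y - V x1))\<^sup>2 + 2 * (norm (y - V x2))\<^sup>2 - 4 * d"
proof -
  note lin = clinear_simps[OF clinear_isometry[OF V]]
  define u v where "u = y - V x1" and "v = y - V x2"
  define mid where "mid = (1/2) *\<^sub>R (x1 + x2)"
  have "u + v = 2 *\<^sub>R (y - V mid)"
    by (simp add: u_def v_def mid_def lin scaleR_add_right scaleR_diff_right scaleR_2)
  then have "4 * d \<le> (norm (u + v))\<^sup>2"
    using d[of mid] by (simp add: power_mult_distrib)
  moreover have "norm (x1 - x2) = norm (u - v)"
    by (simp add: u_def v_def clinear_diff[OF clinear_isometry[OF V], symmetric] norm_isometry[OF V]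
        norm_minus_commute)
  moreover have "(norm (u - v))\<^sup>2 + (norm (u + v))\<^sup>2 = 2 * (norm u)\<^sup>2 + 2 * (norm v)\<^sup>2"
    by (simp add: power2_norm_add_cinner power2_norm_diff_cinner)
  ultimately show ?thesis
    by (simp add: u_def v_def)
qed

lemma isometry_nearest_point:
  fixes V :: "'a::chilbert \<Rightarrow> 'a"
  assumes V: "isometry V"
  shows "\<exists>w. \<forall>z. norm (y - V w) \<le> norm (y - V z)"
proof -
  define dist2 where "dist2 x = (norm (y - V x))\<^sup>2" for x
  define d where "d = Inf (range dist2)"
  have d_le: "d \<le> dist2 z" for z
    unfolding d_def by (rule cInf_lower) (auto intro: bdd_belowI[of _ 0] simp: dist2_def)
  have "\<exists>x. dist2 x < d + inverse (real (Suc n))" for n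
    using cInf_lessD[of "range dist2" "d + inverse (real (Suc n))"] by (auto simp: d_def)
  then obtain xs where xs: "\<And>n. dist2 (xs n) < d + inverse (real (Suc n))"
    by metis
  have "(norm (xs m - xs n))\<^sup>2 \<le> 2 * inverse (real (Suc m)) + 2 * inverse (real (Suc n))" for m n
    using isometry_power2_norm_diff_le[OF V, of d y "xs m" "xs n"] d_le xs[of m] xs[of n]
    by (simp add: dist2_def)
  then obtain w where w: "xs \<longlonglongrightarrow> w"
    using Cauchy_if_power2_norm_diff_le Cauchy_convergent_iff convergent_def by blast
  have "(\<lambda>n. dist2 (xs n)) \<longlonglongrightarrow> dist2 w"
    unfolding dist2_def
    by (intro tendsto_intros bounded_linear.tendsto[OF bounded_linear_isometry[OF V]] w)
  moreover have "(\<lambda>n. d + inverse (real (Suc n))) \<longlonglongrightarrow> d + 0"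
    by (intro tendsto_add tendsto_const LIMSEQ_inverse_real_of_nat)
  ultimately have "dist2 w \<le> d"
    using xs by (intro LIMSEQ_le) (auto intro: less_imp_le)
  then have "(norm (y - V w))\<^sup>2 \<le> (norm (y - V z))\<^sup>2" for z
    using d_le[of z] unfolding dist2_def by linarith
  then show ?thesis
    by (meson norm_ge_zero power2_le_imp_le)
qed

lemma isometry_adjoint_exists:
  fixes V :: "'a::chilbert \<Rightarrow> 'a"
  assumes V: "isometry V"
  shows "\<exists>w. \<forall>x. cinner (V x) y = cinner x w"
proof -
  obtain w where w: "\<And>z. norm (y - V w) \<le> norm (y - V z)"
    using isometry_nearest_point[OF V] by blast
  have orth: "cinner (V x) (y - V w) = 0" for x
  proof (rule cinner_eq_0_if_nearest)
    show "norm (y - V w) \<le> norm (y - V w - t *\<^sub>C V x)" for t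
      using w[of "w + t *\<^sub>C x"] by (simp add: clinear_simps[OF clinear_isometry[OF V]] algebra_simps)
  qed
  show ?thesis
    using orth by (auto simp: cinner_diff_right cinner_isometry[OF V])
qed

lemma adj_eqI:
  assumes "\<And>x y. cinner (T x) y = cinner x (S y)"
  shows "adj T = S"
proof
  show "adj T y = S y" for y
    unfolding adj_def by (rule the_equality) (use assms in \<open>auto intro: cinner_extensionality\<close>)
qed

lemma cinner_isometry_adj:
  fixes V :: "'a::chilbert \<Rightarrow> 'a"
  assumes V: "isometry V"
  shows "cinner (V x) y = cinner x (adj V y)"
proof -
  obtain W where W: "\<And>x y. cinner (V x) y = cinner x (W y)"
    using isometry_adjoint_exists[OF V] by metis
  then have "adj V = W"
    by (rule adj_eqI)
  with W show ?thesis
    by simp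
qed

lemma cinner_adj_isometry:
  fixes V :: "'a::chilbert \<Rightarrow> 'a"
  assumes "isometry V"
  shows "cinner (adj V y) x = cinner y (V x)"
  by (metis assms cinner_commute cinner_isometry_adj)

lemma clinear_adj_isometry:
  fixes V :: "'a::chilbert \<Rightarrow> 'a"
  assumes V: "isometry V"
  shows "clinear (adj V)"
proof -
  have "adj V (x + y) = adj V x + adj V y" for x y
    by (rule cinner_extensionality) (simp add: cinner_isometry_adj[OF V, symmetric] cinner_add_right)
  moreover have "adj V (a *\<^sub>C x) = a *\<^sub>C adj V x" for a x
    by (rule cinner_extensionality)
      (simp add: cinner_isometry_adj[OF V, symmetric] cinner_scaleC_right)
  ultimately show ?thesis
    by (simp add: clinear_def)
qed

lemma adj_isometry_cancel:
  fixes V :: "'a::chilbert \<Rightarrow> 'a"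
  assumes V: "isometry V"
  shows "adj V (V x) = x"
  by (rule cinner_extensionality) (simp add: cinner_isometry_adj[OF V, symmetric] cinner_isometry[OF V])

lemma norm_adj_isometry_le:
  fixes V :: "'a::chilbert \<Rightarrow> 'a"
  assumes V: "isometry V"
  shows "norm (adj V x) \<le> norm x"
proof -
  have "(norm (adj V x))\<^sup>2 = Re (cinner (V (adj V x)) x)"
    by (simp add: power2_norm_eq_cinner cinner_isometry_adj[OF V])
  also have "\<dots> \<le> norm (adj V x) * norm x"
    using complex_Re_le_cmod cmod_cinner_le[of "V (adj V x)" x] norm_isometry[OF V] by (metis order_trans)
  finally have "norm (adj V x) * norm (adj V x) \<le> norm (adj V x) * norm x"
    by (simp add: power2_eq_square)
  then show ?thesis
    by (cases "adj V x = 0") (simp_all add: mult_le_cancel_left_pos)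
qed

lemma bounded_linear_adj_isometry:
  fixes V :: "'a::chilbert \<Rightarrow> 'a"
  assumes V: "isometry V"
  shows "bounded_linear (adj V)"
  by (rule bounded_linear_intro[where K=1])
    (simp_all add: clinear_simps[OF clinear_adj_isometry[OF V]] scaleR_scaleC norm_adj_isometry_le[OF V])

section \<open>Eigenvectors in finite-dimensional invariant subspaces\<close>

lemma nontrivial_relation_in_span:
  fixes K :: "nat \<Rightarrow> 'a::complex_inner"
  assumes B: "finite B" and K: "\<And>k. k \<le> card B \<Longrightarrow> K k \<in> cvs.span B"
  shows "\<exists>c. (\<Sum>k\<le>card B. c k *\<^sub>C K k) = 0 \<and> (\<exists>k\<le>card B. c k \<noteq> 0)"
proof (cases "inj_on K {..card B}")
  case False
  then obtain i j where ij: "i \<le> card B" "j \<le> card B" "i \<noteq> j" "K i = K j"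
    unfolding inj_on_def by auto
  define c :: "nat \<Rightarrow> complex" where "c k = (if k = i then 1 else if k = j then -1 else 0)" for k
  have "(\<Sum>k\<le>card B. c k *\<^sub>C K k) = (\<Sum>k\<in>{i, j}. c k *\<^sub>C K k)"
    by (rule sum.mono_neutral_right) (use ij in \<open>auto simp: c_def\<close>)
  also have "\<dots> = 0"
    using ij by (simp add: c_def)
  finally show ?thesis
    using ij by (intro exI[of _ c]) (auto simp: c_def)
next
  case True
  then have "card (K ` {..card B}) = Suc (card B)"
    by (simp add: card_image)
  then have "cvs.dependent (K ` {..card B})"
    using cvs.independent_span_bound[OF B] K by fastforce
  then obtain t u where tu: "finite t" "t \<subseteq> K ` {..card B}" "(\<Sum>v\<in>t. u v *\<^sub>C v) = 0"
      "\<exists>v\<in>t. u v \<noteq> 0"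
    unfolding cvs.dependent_explicit by blast
  define c where "c k = (if K k \<in> t then u (K k) else 0)" for k
  have "(\<Sum>k\<le>card B. c k *\<^sub>C K k) = (\<Sum>v\<in>K ` {..card B}. (if v \<in> t then u v else 0) *\<^sub>C v)"
    by (simp add: sum.reindex[OF True] c_def)
  also have "\<dots> = (\<Sum>v\<in>t. u v *\<^sub>C v)"
    by (rule sum.mono_neutral_cong_right) (use tu in auto)
  finally show ?thesis
    using tu by (intro exI[of _ c]) (auto simp: c_def)
qed

text \<open>\<open>poly_op T p x\<close> is \<open>p(T) x\<close>, evaluated by Horner's scheme.\<close>
definition poly_op :: "('a::complex_inner \<Rightarrow> 'a) \<Rightarrow> complex poly \<Rightarrow> 'a \<Rightarrow> 'a" where
  "poly_op T p x = fold_coeffs (\<lambda>a y. a *\<^sub>C x + T y) p 0"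

context
  fixes T :: "'a::complex_inner \<Rightarrow> 'a"
  assumes T: "clinear T"
begin

lemma poly_op_0 [simp]: "poly_op T 0 x = 0"
  by (simp add: poly_op_def)

lemma poly_op_pCons: "poly_op T (pCons a p) x = a *\<^sub>C x + T (poly_op T p x)"
  by (cases "p = 0 \<and> a = 0") (auto simp: poly_op_def clinear_zero[OF T])

lemma poly_op_add: "poly_op T (p + q) x = poly_op T p x + poly_op T q x"
  by (induction p q rule: poly_induct2)
    (simp_all add: poly_op_pCons clinear_add[OF T] algebra_simps)

lemma poly_op_smult: "poly_op T (smult c p) x = c *\<^sub>C poly_op T p x"
  by (induction p) (simp_all add: poly_op_pCons clinear_scaleC[OF T] scaleC_add_right)

lemma poly_op_linear_factor: "poly_op T ([:- r, 1:] * q) x = T (poly_op T q x) - r *\<^sub>C poly_op T q x"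
proof -
  have "[:- r, 1:] * q = smult (- r) q + pCons 0 q"
    by simp
  then show ?thesis
    by (simp only: poly_op_add poly_op_smult poly_op_pCons) simp
qed

lemma poly_op_monom: "poly_op T (monom c k) x = c *\<^sub>C (T ^^ k) x"
  by (induction k)
    (simp_all add: monom_0 monom_Suc poly_op_pCons clinear_zero[OF T] clinear_scaleC[OF T])

lemma poly_op_sum: "poly_op T (sum f A) x = (\<Sum>a\<in>A. poly_op T (f a) x)"
  by (induction A rule: infinite_finite_induct) (simp_all add: poly_op_add)

lemma poly_op_in_subspace:
  assumes "cvs.subspace E" "T ` E \<subseteq> E" "x \<in> E"
  shows "poly_op T p x \<in> E"
  by (induction p)
    (use assms in \<open>auto simp: poly_op_pCons cvs.subspace_0 cvs.subspace_add cvs.subspace_scale\<close>)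

text \<open>Split off a linear factor of \<open>q\<close> (fundamental theorem of algebra): either the remaining
  factor already annihilates \<open>x\<close>, or it maps \<open>x\<close> to an eigenvector.\<close>
lemma eigenvector_if_poly_op_eq_0:
  assumes E: "cvs.subspace E" "T ` E \<subseteq> E"
  shows "q \<noteq> 0 \<Longrightarrow> poly_op T q x = 0 \<Longrightarrow> x \<in> E \<Longrightarrow> x \<noteq> 0
    \<Longrightarrow> \<exists>f \<beta>. f \<in> E \<and> f \<noteq> 0 \<and> T f = \<beta> *\<^sub>C f"
proof (induction "degree q" arbitrary: q rule: less_induct)
  case less
  show ?case
  proof (cases "degree q = 0")
    case True
    then obtain a where "q = [:a:]" "a \<noteq> 0"
      using less.prems(1) by (metis degree_eq_zeroE pCons_eq_0_iff)
    then show ?thesis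
      using less.prems by (simp add: poly_op_pCons clinear_zero[OF T])
  next
    case False
    then have "\<not> constant (poly q)"
      by (simp add: constant_degree)
    then obtain r where "poly q r = 0"
      using fundamental_theorem_of_algebra by blast
    then obtain q' where q': "q = [:- r, 1:] * q'"
      by (metis poly_eq_0_iff_dvd dvdE)
    with less.prems(1) have "q' \<noteq> 0"
      by auto
    then have "degree q = Suc (degree q')"
      unfolding q' by (subst degree_mult_eq) auto
    then have "degree q' < degree q"
      by simp
    define y where "y = poly_op T q' x"
    have "T y - r *\<^sub>C y = 0"
      using less.prems(2) unfolding q' y_def by (simp only: poly_op_linear_factor)
    then have Ty: "T y = r *\<^sub>C y"
      by simp
    show ?thesis
    proof (cases "y = 0")
      case True
      then show ?thesis
        using less.hyps[OF \<open>degree q' < degree q\<close> \<open>q' \<noteq> 0\<close>] less.prems by (simp add: y_def)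
    next
      case False
      moreover have "y \<in> E"
        unfolding y_def by (rule poly_op_in_subspace[OF E less.prems(3)])
      ultimately show ?thesis
        using Ty by blast
    qed
  qed
qed

lemma invariant_subspace_has_eigenvector:
  assumes E: "cvs.subspace E" "T ` E \<subseteq> E" and B: "finite B" "E \<subseteq> cvs.span B"
    and g: "g \<in> E" "g \<noteq> 0"
  shows "\<exists>f \<beta>. f \<in> E \<and> f \<noteq> 0 \<and> T f = \<beta> *\<^sub>C f"
proof -
  have "(T ^^ k) g \<in> E" for k
    by (induction k) (use E g in auto)
  then obtain c k0 where c: "(\<Sum>k\<le>card B. c k *\<^sub>C (T ^^ k) g) = 0" "k0 \<le> card B" "c k0 \<noteq> 0"
    using nontrivial_relation_in_span[OF B(1), of "\<lambda>k. (T ^^ k) g"] B(2) by blast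
  define p where "p = (\<Sum>k\<le>card B. monom (c k) k)"
  have "coeff p k0 = c k0"
    using c(2) by (simp add: p_def coeff_sum)
  then have "p \<noteq> 0"
    using c(3) by auto
  moreover have "poly_op T p g = 0"
    using c(1) by (simp add: p_def poly_op_sum poly_op_monom)
  ultimately show ?thesis
    using eigenvector_if_poly_op_eq_0[OF E] g by blast
qed

end

context
  fixes T T' :: "'a::complex_inner \<Rightarrow> 'a"
  assumes adjoint: "\<And>x y. cinner (T x) y = cinner x (T' y)"
begin

lemma cinner_adjoint_right: "cinner x (T y) = cinner (T' x) y"
  by (metis adjoint cinner_commute)

context
  assumes normal: "\<And>x. T (T' x) = T' (T x)"
begin

lemma norm_adjoint_eq_if_normal: "norm (T' x) = norm (T x)"
proof -
  have "cinner (T x) (T x) = cinner (T' x) (T' x)"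
    by (simp only: adjoint normal[symmetric] cinner_adjoint_right)
  then have "(norm (T x))\<^sup>2 = (norm (T' x))\<^sup>2"
    by (simp only: power2_norm_eq_cinner)
  then show ?thesis
    by simp
qed

lemma adjoint_eigenvector_if_normal:
  assumes Tx: "T x = \<beta> *\<^sub>C x"
  shows "T' x = cnj \<beta> *\<^sub>C x"
proof -
  have "norm (T' x) = cmod \<beta> * norm x"
    by (simp add: norm_adjoint_eq_if_normal Tx norm_scaleC)
  moreover have "cinner (T' x) (cnj \<beta> *\<^sub>C x) = complex_of_real ((cmod \<beta> * norm x)\<^sup>2)"
    by (simp add: cinner_adjoint_right[symmetric] Tx cinner_scaleC_right cinner_self
        power_mult_distrib mult_ac flip: complex_norm_square)
  ultimately have "(norm (T' x - cnj \<beta> *\<^sub>C x))\<^sup>2 = 0"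
    by (simp add: power2_norm_diff_cinner norm_scaleC)
  then show ?thesis
    by simp
qed

end

end

lemma cinner_eq_0_if_distinct_eigenvalues:
  fixes T :: "'a::complex_inner \<Rightarrow> 'a"
  assumes self_adjoint: "\<And>x y. cinner (T x) y = cinner x (T y)"
    and "T x = complex_of_real a *\<^sub>C x" "T y = complex_of_real b *\<^sub>C y" "a \<noteq> b"
  shows "cinner x y = 0"
proof -
  have "complex_of_real a * cinner x y = complex_of_real b * cinner x y"
    using self_adjoint[of x y] assms(2,3) by (simp add: cinner_scaleC_left cinner_scaleC_right)
  with \<open>a \<noteq> b\<close> show ?thesis
    by simp
qed

lemma eigenvalue_in_op_spectrum:
  assumes "T x = \<mu> *\<^sub>C x" "x \<noteq> 0"
  shows "\<mu> \<in> op_spectrum T"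
  unfolding op_spectrum_def
proof clarify
  fix S
  assume "bounded_clinear S" "\<forall>x. S (T x - \<mu> *\<^sub>C x) = x"
  then have "x = S 0"
    using assms(1) by (metis diff_self)
  also have "S 0 = 0"
    using \<open>bounded_clinear S\<close> by (simp add: bounded_clinear_def clinear_zero)
  finally show False
    using assms(2) by simp
qed

definition spectral_sum :: "(real \<times> 'a::complex_inner) list \<Rightarrow> 'a \<Rightarrow> 'a" where
  "spectral_sum L y = (\<Sum>(\<mu>, v)\<leftarrow>L. (complex_of_real \<mu> * cinner v y) *\<^sub>C v)"

lemma spectral_sum_Nil [simp]: "spectral_sum [] y = 0"
  by (simp add: spectral_sum_def)

lemma spectral_sum_Cons [simp]:
  "spectral_sum ((\<mu>, v) # L) y = (complex_of_real \<mu> * cinner v y) *\<^sub>C v + spectral_sum L y"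
  by (simp add: spectral_sum_def)

lemma cinner_spectral_sum: "cinner (spectral_sum L x) y = cinner x (spectral_sum L y)"
proof (induction L)
  case (Cons p L)
  obtain \<mu> v where p: "p = (\<mu>, v)"
    by fastforce
  have "cnj (cinner v x) = cinner x v"
    by (metis cinner_commute)
  with Cons show ?case
    by (simp add: p cinner_simps mult_ac)
qed simp

lemma clinear_spectral_sum: "clinear (spectral_sum L)"
  unfolding clinear_def
  by (intro conjI allI; induction L)
    (auto simp: cinner_add_right cinner_scaleC_right algebra_simps)

lemma spectral_sum_in_span: "spectral_sum L y \<in> cvs.span (snd ` set L)"
proof (induction L)
  case (Cons p L)
  obtain \<mu> v where p: "p = (\<mu>, v)"
    by fastforce
  have "spectral_sum L y \<in> cvs.span (snd ` set (p # L))"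
    using Cons cvs.span_mono[of "snd ` set L" "snd ` set (p # L)"] by auto
  moreover have "v \<in> cvs.span (snd ` set (p # L))"
    by (rule cvs.span_base) (simp add: p)
  ultimately show ?case
    by (simp add: p cvs.span_add cvs.span_scale)
qed (simp add: cvs.span_zero)

lemma op_rank_spectral_sum_le: "op_rank (spectral_sum L) \<le> length L"
proof -
  have "op_rank (spectral_sum L) \<le> card (snd ` set L)"
    unfolding op_rank_def by (rule cvs.dim_le_card) (auto intro: spectral_sum_in_span)
  also have "\<dots> \<le> length L"
    by (metis card_image_le card_length finite_set le_trans)
  finally show ?thesis .
qed

section \<open>Diagonal operators with respect to an orthonormal triple\<close>

locale orthonormal_triple =
  fixes v1 v2 v3 :: "'a::complex_inner"
  assumes cinner_self_basis: "cinner v1 v1 = 1" "cinner v2 v2 = 1" "cinner v3 v3 = 1"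
    and cinner_basis_orthogonal: "cinner v1 v2 = 0" "cinner v1 v3 = 0" "cinner v2 v3 = 0"
begin

lemma cinner_basis_orthogonal': "cinner v2 v1 = 0" "cinner v3 v1 = 0" "cinner v3 v2 = 0"
  using cinner_basis_orthogonal by (metis cinner_commute complex_cnj_zero)+

lemmas cinner_basis = cinner_self_basis cinner_basis_orthogonal cinner_basis_orthogonal'

lemma basis_nonzero: "v1 \<noteq> 0" "v2 \<noteq> 0" "v3 \<noteq> 0"
  using cinner_self_basis by auto

definition diag_op :: "real \<Rightarrow> real \<Rightarrow> real \<Rightarrow> 'a \<Rightarrow> 'a" where
  "diag_op a b c = spectral_sum [(a, v1), (b, v2), (c, v3)]"

lemma diag_op_apply: "diag_op a b c y = (complex_of_real a * cinner v1 y) *\<^sub>C v1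
    + (complex_of_real b * cinner v2 y) *\<^sub>C v2 + (complex_of_real c * cinner v3 y) *\<^sub>C v3"
  by (simp add: diag_op_def add.assoc)

lemma cinner_basis_diag_op:
  "cinner v1 (diag_op a b c y) = complex_of_real a * cinner v1 y"
  "cinner v2 (diag_op a b c y) = complex_of_real b * cinner v2 y"
  "cinner v3 (diag_op a b c y) = complex_of_real c * cinner v3 y"
  by (simp_all add: diag_op_apply cinner_add_right cinner_scaleC_right cinner_basis)

lemma diag_op_basis:
  "diag_op a b c v1 = complex_of_real a *\<^sub>C v1"
  "diag_op a b c v2 = complex_of_real b *\<^sub>C v2"
  "diag_op a b c v3 = complex_of_real c *\<^sub>C v3"
  by (simp_all add: diag_op_apply cinner_basis)

lemma clinear_diag_op: "clinear (diag_op a b c)"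
  by (simp add: diag_op_def clinear_spectral_sum)

lemma cinner_diag_op: "cinner (diag_op a b c x) y = cinner x (diag_op a b c y)"
  unfolding diag_op_def by (rule cinner_spectral_sum)

lemma diag_op_diag_op: "diag_op a b c (diag_op a' b' c' y) = diag_op (a * a') (b * b') (c * c') y"
  by (simp add: diag_op_apply[of a b c] cinner_basis_diag_op) (simp add: diag_op_apply mult.assoc)

lemma diag_op_diff: "diag_op a b c y - diag_op a' b' c' y = diag_op (a - a') (b - b') (c - c') y"
  by (simp add: diag_op_apply algebra_simps)

lemma scaleC_diag_op:
  "complex_of_real t *\<^sub>C diag_op a b c y = diag_op (t * a) (t * b) (t * c) y"
  by (simp add: diag_op_apply scaleC_add_right mult.assoc)

lemma cinner_basis_eigenvector:
  assumes "diag_op a b c x = \<mu> *\<^sub>C x"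
  shows "\<mu> \<noteq> complex_of_real a \<Longrightarrow> cinner v1 x = 0"
    and "\<mu> \<noteq> complex_of_real b \<Longrightarrow> cinner v2 x = 0"
    and "\<mu> \<noteq> complex_of_real c \<Longrightarrow> cinner v3 x = 0"
  using cinner_basis_diag_op[of a b c x] by (simp_all add: assms cinner_scaleC_right)

lemma eigsp_diag_op_trivial:
  assumes "\<mu> \<noteq> 0" "\<mu> \<noteq> complex_of_real a" "\<mu> \<noteq> complex_of_real b" "\<mu> \<noteq> complex_of_real c"
  shows "eigsp (diag_op a b c) \<mu> = {0}"
proof -
  have "x = 0" if x: "diag_op a b c x = \<mu> *\<^sub>C x" for x
  proof -
    have "\<mu> *\<^sub>C x = 0"
      using cinner_basis_eigenvector[OF x] assms(2-4) by (simp add: x[symmetric] diag_op_apply)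
    with assms(1) show ?thesis
      by simp
  qed
  then show ?thesis
    by (auto simp: eigsp_def clinear_zero[OF clinear_diag_op])
qed

lemma eigsp_diag_op_first:
  assumes "a \<noteq> 0" "a \<noteq> b" "a \<noteq> c"
  shows "eigsp (diag_op a b c) (complex_of_real a) = range (\<lambda>z. z *\<^sub>C v1)"
proof -
  have "x \<in> range (\<lambda>z. z *\<^sub>C v1)" if x: "diag_op a b c x = complex_of_real a *\<^sub>C x" for x
  proof (rule range_eqI)
    show "x = cinner v1 x *\<^sub>C v1"
    proof -
      have "cinner v2 x = 0" "cinner v3 x = 0"
        using cinner_basis_eigenvector(2,3)[OF x] assms(2,3) by simp_all
      then have scaled: "complex_of_real a *\<^sub>C x = complex_of_real a *\<^sub>C (cinner v1 x *\<^sub>C v1)"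
        by (simp add: x[symmetric] diag_op_apply)
      show ?thesis
        by (rule cvs.scale_left_imp_eq[OF _ scaled]) (use assms(1) in simp)
    qed
  qed
  moreover have "diag_op a b c (z *\<^sub>C v1) = complex_of_real a *\<^sub>C z *\<^sub>C v1" for z
    by (simp add: clinear_scaleC[OF clinear_diag_op] diag_op_basis mult.commute)
  ultimately show ?thesis
    unfolding eigsp_def by auto
qed

lemma norm_diag_op_le: "norm (diag_op a b c y) \<le> norm y * (\<bar>a\<bar> + \<bar>b\<bar> + \<bar>c\<bar>)"
proof -
  have summand: "norm ((complex_of_real t * cinner v y) *\<^sub>C v) \<le> norm y * \<bar>t\<bar>"
    if "cinner v v = 1" for t and v :: 'a
  proof -
    have "(norm v)\<^sup>2 = 1"
      using that by (simp add: power2_norm_eq_cinner)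
    then have "norm v = 1"
      using norm_ge_zero[of v] by (simp add: power2_eq_1_iff)
    then show ?thesis
      using cmod_cinner_le[of v y] by (simp add: norm_scaleC norm_mult mult_left_mono mult.commute)
  qed
  have "norm (diag_op a b c y) \<le> norm y * \<bar>a\<bar> + norm y * \<bar>b\<bar> + norm y * \<bar>c\<bar>"
    unfolding diag_op_apply
    by (intro norm_triangle_le add_mono summand cinner_self_basis norm_triangle_ineq)
  then show ?thesis
    by (simp add: algebra_simps)
qed

text \<open>The inverse of \<open>diag_op a b c - \<mu>\<close>: it is \<open>1/(t - \<mu>)\<close> on the span of the triple and
  \<open>-1/\<mu>\<close> on its orthogonal complement.\<close>
definition diag_resolvent :: "real \<Rightarrow> real \<Rightarrow> real \<Rightarrow> real \<Rightarrow> 'a \<Rightarrow> 'a" where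
  "diag_resolvent a b c \<mu> y = diag_op (1 / (a - \<mu>) + 1 / \<mu>) (1 / (b - \<mu>) + 1 / \<mu>)
    (1 / (c - \<mu>) + 1 / \<mu>) y - complex_of_real (1 / \<mu>) *\<^sub>C y"

lemma bounded_clinear_diag_resolvent: "bounded_clinear (diag_resolvent a b c \<mu>)"
proof -
  define p q r where "p = 1 / (a - \<mu>) + 1 / \<mu>" and "q = 1 / (b - \<mu>) + 1 / \<mu>"
    and "r = 1 / (c - \<mu>) + 1 / \<mu>"
  have R: "diag_resolvent a b c \<mu> y = diag_op p q r y - complex_of_real (1 / \<mu>) *\<^sub>C y" for y
    by (simp add: diag_resolvent_def p_def q_def r_def)
  have "clinear (diag_resolvent a b c \<mu>)"
    unfolding clinear_def R by (simp add: clinear_simps[OF clinear_diag_op] algebra_simps)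
  moreover have "norm (diag_resolvent a b c \<mu> y) \<le> norm y * (\<bar>p\<bar> + \<bar>q\<bar> + \<bar>r\<bar> + \<bar>1 / \<mu>\<bar>)" for y
  proof -
    have "norm (diag_resolvent a b c \<mu> y) \<le> norm y * (\<bar>p\<bar> + \<bar>q\<bar> + \<bar>r\<bar>) + norm y * \<bar>1 / \<mu>\<bar>"
      unfolding R
      by (rule order_trans[OF norm_triangle_ineq4 add_mono[OF norm_diag_op_le]])
        (simp add: norm_scaleC norm_divide mult.commute)
    then show ?thesis
      by (simp add: algebra_simps)
  qed
  ultimately show ?thesis
    unfolding bounded_clinear_def by blast
qed

lemma diag_resolvent:
  assumes "\<mu> \<noteq> 0" "\<mu> \<notin> {a, b, c}"
  shows diag_resolvent_left: "diag_resolvent a b c \<mu> (diag_op a b c x - complex_of_real \<mu> *\<^sub>C x) = x"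
    and diag_resolvent_right:
      "diag_op a b c (diag_resolvent a b c \<mu> y) - complex_of_real \<mu> *\<^sub>C diag_resolvent a b c \<mu> y = y"
proof -
  define \<rho> where "\<rho> t = 1 / (t - \<mu>) + 1 / \<mu>" for t
  have R: "diag_resolvent a b c \<mu> y = diag_op (\<rho> a) (\<rho> b) (\<rho> c) y - complex_of_real (1 / \<mu>) *\<^sub>C y"
    for y
    by (simp add: diag_resolvent_def \<rho>_def)
  have \<rho>: "\<rho> t * t - \<mu> * \<rho> t = 1 / \<mu> * t" if "t \<noteq> \<mu>" for t
  proof -
    have "\<rho> t * t - \<mu> * \<rho> t = (t - \<mu>) / (t - \<mu>) + (t - \<mu>) / \<mu>"
      by (simp add: \<rho>_def field_split_simps)
    also have "\<dots> = 1 / \<mu> * t"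
      using that assms(1) by (simp add: diff_divide_distrib)
    finally show ?thesis .
  qed
  have ne: "a \<noteq> \<mu>" "b \<noteq> \<mu>" "c \<noteq> \<mu>"
    using assms(2) by auto
  have key: "diag_op (\<rho> a * a) (\<rho> b * b) (\<rho> c * c) y
      - complex_of_real \<mu> *\<^sub>C diag_op (\<rho> a) (\<rho> b) (\<rho> c) y
      = complex_of_real (1 / \<mu>) *\<^sub>C diag_op a b c y" for y
    by (simp only: scaleC_diag_op diag_op_diff \<rho>[OF ne(1)] \<rho>[OF ne(2)] \<rho>[OF ne(3)])
  have cancel: "complex_of_real (1 / \<mu>) *\<^sub>C complex_of_real \<mu> *\<^sub>C x = x"
    "complex_of_real \<mu> *\<^sub>C complex_of_real (1 / \<mu>) *\<^sub>C x = x" for x :: 'a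
    using assms(1) by simp_all
  note D = clinear_simps[OF clinear_diag_op]
  have "diag_resolvent a b c \<mu> (diag_op a b c x - complex_of_real \<mu> *\<^sub>C x)
      = (diag_op (\<rho> a * a) (\<rho> b * b) (\<rho> c * c) x
          - complex_of_real \<mu> *\<^sub>C diag_op (\<rho> a) (\<rho> b) (\<rho> c) x)
        - (complex_of_real (1 / \<mu>) *\<^sub>C diag_op a b c x - x)"
    by (simp only: R D diag_op_diag_op cvs.scale_right_diff_distrib cancel)
  then show "diag_resolvent a b c \<mu> (diag_op a b c x - complex_of_real \<mu> *\<^sub>C x) = x"
    by (simp only: key) simp
  have "diag_op a b c (diag_resolvent a b c \<mu> y) - complex_of_real \<mu> *\<^sub>C diag_resolvent a b c \<mu> y
      = (diag_op (\<rho> a * a) (\<rho> b * b) (\<rho> c * c) y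
          - complex_of_real \<mu> *\<^sub>C diag_op (\<rho> a) (\<rho> b) (\<rho> c) y)
        - (complex_of_real (1 / \<mu>) *\<^sub>C diag_op a b c y - y)"
    by (simp only: R D diag_op_diag_op cvs.scale_right_diff_distrib cancel
        mult.commute[of a] mult.commute[of b] mult.commute[of c] scaleC_diag_op) simp
  then show "diag_op a b c (diag_resolvent a b c \<mu> y)
      - complex_of_real \<mu> *\<^sub>C diag_resolvent a b c \<mu> y = y"
    by (simp only: key) simp
qed

lemma not_in_op_spectrum_diag_op:
  assumes "\<mu> \<noteq> 0" "\<mu> \<notin> {a, b, c}"
  shows "complex_of_real \<mu> \<notin> op_spectrum (diag_op a b c)"
  using bounded_clinear_diag_resolvent diag_resolvent[OF assms] unfolding op_spectrum_def by blast

lemma in_op_spectrum_diag_op_iff: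
  assumes "\<mu> \<noteq> 0"
  shows "complex_of_real \<mu> \<in> op_spectrum (diag_op a b c) \<longleftrightarrow> \<mu> \<in> {a, b, c}"
  using not_in_op_spectrum_diag_op[OF assms]
    eigenvalue_in_op_spectrum[of "diag_op a b c", OF diag_op_basis(1) basis_nonzero(1)]
    eigenvalue_in_op_spectrum[of "diag_op a b c", OF diag_op_basis(2) basis_nonzero(2)]
    eigenvalue_in_op_spectrum[of "diag_op a b c", OF diag_op_basis(3) basis_nonzero(3)]
  by blast

lemma op_kernel_diag_op:
  assumes "a \<noteq> 0" "b \<noteq> 0" "c \<noteq> 0"
  shows "op_kernel (diag_op a b c) = {z. cinner v1 z = 0 \<and> cinner v2 z = 0 \<and> cinner v3 z = 0}"
proof -
  have "diag_op a b c z = 0 \<longleftrightarrow> cinner v1 z = 0 \<and> cinner v2 z = 0 \<and> cinner v3 z = 0" for z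
  proof
    assume "diag_op a b c z = 0"
    then show "cinner v1 z = 0 \<and> cinner v2 z = 0 \<and> cinner v3 z = 0"
      using cinner_basis_diag_op[of a b c z] assms by simp
  qed (simp add: diag_op_apply)
  then show ?thesis
    by (simp add: op_kernel_def)
qed

text \<open>\<open>diag_op 1 1 1\<close> is the orthogonal projection onto the span of the triple.\<close>
lemma orth_compl_op_kernel_diag_op:
  assumes "a \<noteq> 0" "b \<noteq> 0" "c \<noteq> 0"
  shows "orth_compl (op_kernel (diag_op a b c)) = {x. diag_op 1 1 1 x = x}"
proof -
  note ker = op_kernel_diag_op[OF assms]
  have P_ker: "diag_op 1 1 1 z = 0" if "z \<in> op_kernel (diag_op a b c)" for z
    using that by (simp add: ker diag_op_apply)
  have "diag_op 1 1 1 x = x" if x: "x \<in> orth_compl (op_kernel (diag_op a b c))" for x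
  proof -
    define y where "y = x - diag_op 1 1 1 x"
    have y: "y \<in> op_kernel (diag_op a b c)"
      by (simp add: ker y_def cinner_diff_right cinner_basis_diag_op)
    then have "cinner y x = 0"
      using x by (simp add: orth_compl_def)
    moreover have "cinner y (diag_op 1 1 1 x) = 0"
      by (simp add: cinner_diag_op[symmetric] P_ker[OF y])
    moreover have "cinner y y = cinner y x - cinner y (diag_op 1 1 1 x)"
      using cinner_diff_right[of y x "diag_op 1 1 1 x"] by (simp only: y_def[symmetric])
    ultimately have "cinner y y = 0"
      by simp
    then show ?thesis
      by (simp add: y_def cinner_eq_zero_iff)
  qed
  moreover have "x \<in> orth_compl (op_kernel (diag_op a b c))" if x: "diag_op 1 1 1 x = x" for x
    unfolding orth_compl_def
  proof (intro CollectI ballI)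
    fix z
    assume "z \<in> op_kernel (diag_op a b c)"
    then show "cinner z x = 0"
      by (metis x P_ker cinner_diag_op cinner_zero_left)
  qed
  ultimately show ?thesis
    by blast
qed

definition coords :: "'a \<Rightarrow> complex^3" where
  "coords x = (\<chi> i. if i = 1 then cinner v1 x else if i = 2 then cinner v2 x else cinner v3 x)"

lemma coords_nth: "coords x $ 1 = cinner v1 x" "coords x $ 2 = cinner v2 x" "coords x $ 3 = cinner v3 x"
  by (simp_all add: coords_def)

lemma cinner3_coords:
  assumes "diag_op 1 1 1 x = x"
  shows "cinner3 (coords x) (coords y) = cinner x y"
proof -
  have "cinner x y = cinner (diag_op 1 1 1 x) y"
    by (simp add: assms)
  then show ?thesis
    by (simp add: cinner3_def sum_3 coords_nth diag_op_apply cinner_add_left cinner_scaleC_left)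
qed

lemma coords_surj: "\<exists>x. diag_op 1 1 1 x = x \<and> coords x = u"
proof -
  define x where "x = (u $ 1) *\<^sub>C v1 + (u $ 2) *\<^sub>C v2 + (u $ 3) *\<^sub>C v3"
  have x: "cinner v1 x = u $ 1" "cinner v2 x = u $ 2" "cinner v3 x = u $ 3"
    by (simp_all add: x_def cinner_add_right cinner_scaleC_right cinner_basis)
  then have "diag_op 1 1 1 x = x"
    by (simp add: diag_op_apply) (simp add: x_def)
  moreover have "coords x = u"
    by (simp add: vec_eq_iff forall_3 coords_nth x)
  ultimately show ?thesis
    by blast
qed

lemma unitarily_equiv_restr_diag_op:
  assumes "a \<noteq> 0" "b \<noteq> 0" "c \<noteq> 0"
  shows "unitarily_equiv_restr (diag_op a b c) (orth_compl (op_kernel (diag_op a b c)))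
    (diag3 (complex_of_real a) (complex_of_real b) (complex_of_real c))"
proof -
  define K where "K = orth_compl (op_kernel (diag_op a b c))"
  have K: "x \<in> K \<longleftrightarrow> diag_op 1 1 1 x = x" for x
    by (simp add: K_def orth_compl_op_kernel_diag_op[OF assms])
  have "diag_op a b c ` K \<subseteq> K"
    by (auto simp: K diag_op_diag_op)
  moreover have "\<forall>x\<in>K. \<forall>y\<in>K. \<forall>z. coords (z *\<^sub>C x + y) = z *s coords x + coords y"
    by (simp add: vec_eq_iff forall_3 coords_nth cinner_add_right cinner_scaleC_right)
  moreover have "\<forall>x\<in>K. \<forall>y\<in>K. cinner3 (coords x) (coords y) = cinner x y"
    by (simp add: K cinner3_coords)
  moreover have "coords ` K = UNIV"
    using coords_surj K by (metis UNIV_I image_eqI subsetI subset_antisym)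
  moreover have "\<forall>x\<in>K. coords (diag_op a b c x)
      = diag3 (complex_of_real a) (complex_of_real b) (complex_of_real c) *v coords x"
    by (simp add: vec_eq_iff forall_3 coords_nth matrix_vector_mult_def sum_3 diag3_def
        cinner_basis_diag_op)
  ultimately show ?thesis
    unfolding unitarily_equiv_restr_def K_def by blast
qed

end

section \<open>Pairs of commuting isometries\<close>

locale commuting_isometries =
  fixes V1 V2 :: "'a::chilbert \<Rightarrow> 'a"
  assumes isometric_pair: "isometric_pair V1 V2"
begin

abbreviation X :: "'a \<Rightarrow> 'a" where "X \<equiv> cross_comm V1 V2"
abbreviation C :: "'a \<Rightarrow> 'a" where "C \<equiv> defect_op V1 V2"

lemma isometry_V1: "isometry V1" and isometry_V2: "isometry V2"
  and V1_V2_commute: "V1 (V2 x) = V2 (V1 x)"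
  using isometric_pair by (auto simp: isometric_pair_def fun_eq_iff)

lemmas linear_simps =
  clinear_simps[OF clinear_isometry[OF isometry_V1]] adj_isometry_cancel[OF isometry_V1]
  clinear_simps[OF clinear_isometry[OF isometry_V2]] adj_isometry_cancel[OF isometry_V2]
  clinear_simps[OF clinear_adj_isometry[OF isometry_V1]]
  clinear_simps[OF clinear_adj_isometry[OF isometry_V2]]

lemmas cinner_V1 = cinner_isometry_adj[OF isometry_V1]
lemmas cinner_V2 = cinner_isometry_adj[OF isometry_V2]
lemmas cinner_adj1 = cinner_adj_isometry[OF isometry_V1]
lemmas cinner_adj2 = cinner_adj_isometry[OF isometry_V2]

lemma adj_commute: "adj V1 (adj V2 x) = adj V2 (adj V1 x)"
  by (rule cinner_extensionality)
    (simp add: cinner_V1[symmetric] cinner_V2[symmetric] V1_V2_commute)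

lemma cross_comm_apply: "X x = adj V2 (V1 x) - V1 (adj V2 x)"
  by (simp add: cross_comm_def)

lemma defect_op_apply: "C x = x - V1 (adj V1 x) - V2 (adj V2 x) + V1 (V2 (adj V1 (adj V2 x)))"
  by (simp add: defect_op_def)

lemma clinear_cross_comm: "clinear X"
  by (simp add: clinear_def cross_comm_apply linear_simps algebra_simps)

lemma clinear_defect_op: "clinear C"
  by (simp add: clinear_def defect_op_apply linear_simps algebra_simps)

lemma adj_cross_comm: "adj X y = adj V1 (V2 y) - V2 (adj V1 y)"
proof -
  have "cinner (X x) y = cinner x (adj V1 (V2 y) - V2 (adj V1 y))" for x y
    by (simp add: cross_comm_apply cinner_diff_left cinner_diff_right cinner_V1 cinner_V2
        cinner_adj1 cinner_adj2)
  then show ?thesis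
    by (simp add: adj_eqI)
qed

lemma cinner_cross_comm: "cinner (X x) y = cinner x (adj X y)"
  by (simp add: adj_cross_comm cross_comm_apply cinner_diff_left cinner_diff_right cinner_V1
      cinner_V2 cinner_adj1 cinner_adj2)

lemma cinner_defect_op: "cinner (C x) y = cinner x (C y)"
  by (simp add: defect_op_apply cinner_diff_left cinner_diff_right cinner_add_left cinner_add_right
      cinner_V1 cinner_V2 cinner_adj1[symmetric] cinner_adj2[symmetric] adj_commute)

lemma cross_comm_V2: "X (V2 x) = 0"
  by (simp add: cross_comm_apply V1_V2_commute linear_simps)

lemma adj_cross_comm_V1: "adj X (V1 x) = 0"
  by (simp add: adj_cross_comm V1_V2_commute[symmetric] linear_simps)

lemma adj1_cross_comm: "adj V1 (X x) = 0"
  by (simp add: cross_comm_apply linear_simps adj_commute)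

lemma adj1_V2: "adj V1 (V2 y) = V2 (adj V1 y) + adj X y"
  by (simp add: adj_cross_comm)

lemma adj2_V1: "adj V2 (V1 y) = V1 (adj V2 y) + X y"
  by (simp add: cross_comm_apply)

lemma adj1_defect_op: "adj V1 (C x) = - adj X (adj V2 x)"
  by (simp add: defect_op_apply adj_cross_comm linear_simps adj_commute)

lemma adj2_V1_V2: "adj V2 (V1 (V2 y)) = V1 y"
  by (simp add: V1_V2_commute linear_simps)

lemma adj2_defect_op: "adj V2 (C x) = - X (adj V1 x)"
  by (simp add: defect_op_apply cross_comm_apply linear_simps adj_commute adj2_V1_V2)

lemma defect_op_V1_V2: "C (V1 (V2 y)) = 0"
proof -
  have "adj V1 (V2 (V1 y)) = V2 y"
    by (simp add: V1_V2_commute[symmetric] linear_simps)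
  then show ?thesis
    by (simp add: defect_op_apply linear_simps V1_V2_commute)
qed

text \<open>\<open>\<langle>x, C x\<rangle> = \<parallel>x\<parallel>\<^sup>2 - \<parallel>V\<^sub>1\<^sup>* x\<parallel>\<^sup>2 - \<parallel>V\<^sub>2\<^sup>* x\<parallel>\<^sup>2 + \<parallel>V\<^sub>1\<^sup>* V\<^sub>2\<^sup>* x\<parallel>\<^sup>2\<close>, and the last
  term is dominated by each of the two middle ones.\<close>
lemma defect_op_eq_self_iff: "C x = x \<longleftrightarrow> adj V1 x = 0 \<and> adj V2 x = 0"
proof
  assume Cx: "C x = x"
  have "cinner x (C x) = cinner x x"
    by (simp add: Cx)
  then have "cinner x x - cinner (adj V1 x) (adj V1 x) - cinner (adj V2 x) (adj V2 x)
      + cinner (adj V1 (adj V2 x)) (adj V1 (adj V2 x)) = cinner x x"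
    by (simp add: defect_op_apply cinner_diff_right cinner_add_right cinner_adj1[symmetric]
        cinner_adj2[symmetric] adj_commute)
  from arg_cong[where f=Re, OF this]
  have eq: "(norm (adj V1 x))\<^sup>2 + (norm (adj V2 x))\<^sup>2 = (norm (adj V1 (adj V2 x)))\<^sup>2"
    unfolding power2_norm_eq_cinner by simp
  have "(norm (adj V1 (adj V2 x)))\<^sup>2 \<le> (norm (adj V2 x))\<^sup>2"
    by (simp add: power_mono norm_adj_isometry_le[OF isometry_V1])
  moreover have "(norm (adj V1 (adj V2 x)))\<^sup>2 \<le> (norm (adj V1 x))\<^sup>2"
    by (simp add: adj_commute power_mono norm_adj_isometry_le[OF isometry_V2])
  ultimately have "(norm (adj V1 x))\<^sup>2 = 0" "(norm (adj V2 x))\<^sup>2 = 0"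
    using eq by (smt (verit) zero_le_power2)+
  then show "adj V1 x = 0 \<and> adj V2 x = 0"
    by simp
qed (simp add: defect_op_apply linear_simps adj_commute)

end

locale normal_commuting_isometries = commuting_isometries +
  assumes normal_cross_comm: "normal_op (cross_comm V1 V2)"
begin

lemma norm_adj_cross_comm: "norm (adj X x) = norm (X x)"
  using normal_cross_comm
  by (intro norm_adjoint_eq_if_normal cinner_cross_comm) (auto simp: normal_op_def fun_eq_iff)

lemma cross_comm_V1: "X (V1 x) = 0"
  using norm_adj_cross_comm[of "V1 x"] by (simp add: adj_cross_comm_V1)

lemma adj_cross_comm_V2: "adj X (V2 x) = 0"
  using norm_adj_cross_comm[of "V2 x"] by (simp add: cross_comm_V2)

lemma adj2_cross_comm: "adj V2 (X x) = 0"
proof (rule cinner_extensionality)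
  have "cinner z (adj V2 (X x)) = cinner (adj X (V2 z)) x" for z
    by (metis cinner_V2 cinner_commute cinner_cross_comm)
  then show "cinner z (adj V2 (X x)) = cinner z 0" for z
    by (simp add: adj_cross_comm_V2)
qed

lemma defect_op_cross_comm: "C (X x) = X x"
  by (simp add: defect_op_eq_self_iff adj1_cross_comm adj2_cross_comm)

text \<open>If \<open>E\<^sub>1\<close> is trivial, then so are \<open>[V\<^sub>2\<^sup>*, V\<^sub>1]\<close> (whose range lies in \<open>E\<^sub>1\<close>) and its
  adjoint; but then \<open>V\<^sub>1\<^sup>* C = V\<^sub>2\<^sup>* C = 0\<close>, so the range of \<open>C\<close> lies in \<open>E\<^sub>1\<close> as well.\<close>
lemma defect_op_eq_0_if_no_fixed_vector:
  assumes "\<And>x. C x = x \<Longrightarrow> x = 0"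
  shows "C y = 0"
proof -
  have X0: "X x = 0" for x
    using assms defect_op_cross_comm by blast
  then have "adj X x = 0" for x
    using norm_adj_cross_comm[of x] by simp
  with X0 have "C (C y) = C y"
    by (simp add: defect_op_eq_self_iff adj1_defect_op adj2_defect_op)
  with assms show ?thesis .
qed

lemma exists_fixed_eigenvector:
  assumes "op_rank C \<noteq> 0"
  obtains f \<beta> where "norm f = 1" "adj V1 f = 0" "adj V2 f = 0" "X f = \<beta> *\<^sub>C f"
proof -
  define E where "E = {x. C x = x}"
  have E: "cvs.subspace E"
    unfolding E_def by (rule cvs.subspaceI) (simp_all add: clinear_simps[OF clinear_defect_op])
  obtain B where B: "range C \<subseteq> cvs.span B" "card B = op_rank C"
    unfolding op_rank_def using cvs.basis_exists by metis
  with assms have "finite B"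
    using card.infinite by force
  moreover have "E \<subseteq> cvs.span B"
    using B(1) by (auto simp: E_def) (metis rangeI subsetD)
  moreover have "X ` E \<subseteq> E"
    by (auto simp: E_def defect_op_cross_comm)
  moreover have "\<exists>g. g \<in> E \<and> g \<noteq> 0"
  proof (rule ccontr)
    assume "\<nexists>g. g \<in> E \<and> g \<noteq> 0"
    then have "range C \<subseteq> cvs.span {}"
      using defect_op_eq_0_if_no_fixed_vector by (auto simp: E_def)
    then have "op_rank C = 0"
      unfolding op_rank_def using cvs.dim_le_card[of "range C" "{}"] by simp
    with assms show False ..
  qed
  ultimately obtain f0 \<beta> where f0: "f0 \<in> E" "f0 \<noteq> 0" "X f0 = \<beta> *\<^sub>C f0"
    using invariant_subspace_has_eigenvector[OF clinear_cross_comm E] by metis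
  have "sgn f0 \<in> E"
    using f0(1) cvs.subspace_scale[OF E] by (simp add: sgn_div_norm scaleR_scaleC)
  moreover have "X (sgn f0) = \<beta> *\<^sub>C sgn f0"
    using eigenvector_sgn_iff[OF clinear_cross_comm f0(2)] f0(3) by simp
  moreover have "norm (sgn f0) = 1"
    using f0(2) by (simp add: norm_sgn)
  ultimately show ?thesis
    using that by (auto simp: E_def defect_op_eq_self_iff)
qed

end

section \<open>The orbit of a unit eigenvector in \<open>E\<^sub>1\<close>\<close>

locale eigenvector_pair = normal_commuting_isometries +
  fixes f :: 'a and \<beta> :: complex
  assumes adj1_f: "adj V1 f = 0" and adj2_f: "adj V2 f = 0" and norm_f: "norm f = 1"
    and cross_comm_f: "X f = \<beta> *\<^sub>C f"
begin

lemma cinner_f_f: "cinner f f = 1"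
  by (simp add: cinner_self norm_f)

lemma defect_op_f: "C f = f"
  by (simp add: defect_op_eq_self_iff adj1_f adj2_f)

lemma adj_cross_comm_f: "adj X f = cnj \<beta> *\<^sub>C f"
  using adjoint_eigenvector_if_normal[of X "adj X", OF cinner_cross_comm _ cross_comm_f]
    normal_cross_comm by (simp add: normal_op_def fun_eq_iff)

definition orbit :: "nat \<Rightarrow> nat \<Rightarrow> 'a" where
  "orbit m n = (V1 ^^ m) ((V2 ^^ n) f)"

lemma orbit_0_0 [simp]: "orbit 0 0 = f"
  and orbit_1_0 [simp]: "orbit (Suc 0) 0 = V1 f"
  and orbit_0_1 [simp]: "orbit 0 (Suc 0) = V2 f"
  by (simp_all add: orbit_def)

lemma V1_orbit: "V1 (orbit m n) = orbit (Suc m) n"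
  by (simp add: orbit_def)

lemma V2_orbit: "V2 (orbit m n) = orbit m (Suc n)"
proof -
  have "V2 ((V1 ^^ m) y) = (V1 ^^ m) (V2 y)" for y
    by (induction m) (simp_all add: V1_V2_commute[symmetric])
  then show ?thesis
    by (simp add: orbit_def)
qed

lemma adj1_orbit_Suc: "adj V1 (orbit (Suc m) n) = orbit m n"
  by (simp flip: V1_orbit add: linear_simps)

lemma adj2_orbit_Suc: "adj V2 (orbit m (Suc n)) = orbit m n"
  by (simp flip: V2_orbit add: linear_simps)

text \<open>Along the edges of the orbit the adjoints act through \<open>[V\<^sub>2\<^sup>*, V\<^sub>1]\<close> and its adjoint,
  which kill every vector except \<open>f\<close> there.\<close>
lemma adj1_orbit_0_Suc: "adj V1 (orbit 0 (Suc n)) = cnj \<beta> *\<^sub>C orbit 0 n"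
proof (induction n)
  case 0
  then show ?case
    by (simp add: adj1_V2 adj1_f adj_cross_comm_f linear_simps)
next
  case (Suc n)
  then show ?case
    by (simp add: V2_orbit[symmetric] adj1_V2 adj_cross_comm_V2 linear_simps)
qed

lemma adj2_orbit_Suc_0: "adj V2 (orbit (Suc m) 0) = \<beta> *\<^sub>C orbit m 0"
proof (induction m)
  case 0
  then show ?case
    by (simp add: adj2_V1 adj2_f cross_comm_f linear_simps)
next
  case (Suc m)
  then show ?case
    by (simp add: V1_orbit[symmetric] adj2_V1 cross_comm_V1 linear_simps)
qed

lemma cinner_f_orbit: "cinner f (orbit m n) = (if m = 0 \<and> n = 0 then 1 else 0)"
proof (cases m)
  case 0
  then show ?thesis
    by (cases n) (simp_all add: cinner_f_f V2_orbit[symmetric] cinner_adj2[symmetric] adj2_f)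
next
  case (Suc k)
  then show ?thesis
    by (simp add: V1_orbit[symmetric] cinner_adj1[symmetric] adj1_f)
qed

lemma cinner_first_orbit:
  "cinner (V1 f) (V1 f) = 1" "cinner (V2 f) (V2 f) = 1"
  "cinner (V1 f) (V2 f) = cnj \<beta>" "cinner (V2 f) (V1 f) = \<beta>"
  "cinner f (V1 f) = 0" "cinner f (V2 f) = 0" "cinner (V1 f) f = 0" "cinner (V2 f) f = 0"
  by (simp_all add: cinner_V1 cinner_V2 cinner_adj1[symmetric] cinner_adj2[symmetric] linear_simps
      adj1_V2 adj2_V1 adj1_f adj2_f cross_comm_f adj_cross_comm_f cinner_scaleC_left
      cinner_scaleC_right cinner_f_f)

lemma cinner_first_orbit_high:
  assumes "2 \<le> m + n"
  shows "cinner f (orbit m n) = 0" "cinner (V1 f) (orbit m n) = 0" "cinner (V2 f) (orbit m n) = 0"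
proof -
  show "cinner f (orbit m n) = 0"
    using assms by (auto simp: cinner_f_orbit)
  show "cinner (V1 f) (orbit m n) = 0"
  proof (cases m)
    case 0
    with assms obtain k where "n = Suc k" "k \<noteq> 0"
      by (cases n) auto
    with 0 show ?thesis
      by (simp add: cinner_V1 adj1_orbit_0_Suc cinner_scaleC_right cinner_f_orbit)
  next
    case (Suc k)
    with assms show ?thesis
      by (auto simp: cinner_V1 adj1_orbit_Suc cinner_f_orbit)
  qed
  show "cinner (V2 f) (orbit m n) = 0"
  proof (cases n)
    case 0
    with assms obtain k where "m = Suc k" "k \<noteq> 0"
      by (cases m) auto
    with 0 show ?thesis
      by (simp add: cinner_V2 adj2_orbit_Suc_0 cinner_scaleC_right cinner_f_orbit)
  next
    case (Suc k)
    with assms show ?thesis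
      by (auto simp: cinner_V2 adj2_orbit_Suc cinner_f_orbit)
  qed
qed

lemma defect_op_V1_f: "C (V1 f) = - \<beta> *\<^sub>C V2 f"
  by (simp add: defect_op_apply adj2_V1 adj1_f adj2_f cross_comm_f linear_simps adj_commute)

lemma defect_op_V2_f: "C (V2 f) = - cnj \<beta> *\<^sub>C V1 f"
  by (simp add: defect_op_apply adj1_V2 adj1_f adj2_f adj_cross_comm_f linear_simps V1_V2_commute)

lemma defect_op_orbit_high:
  assumes "2 \<le> m + n"
  shows "C (orbit m n) = 0"
proof (cases "m = 0 \<or> n = 0")
  case True
  then consider k where "m = 0" "n = Suc (Suc k)" | k where "n = 0" "m = Suc (Suc k)"
    using assms by (metis add_0 add_0_right add_2_eq_Suc le_iff_add)
  then show ?thesis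
  proof cases
    case 1
    then show ?thesis
      by (simp add: defect_op_apply adj1_orbit_0_Suc adj2_orbit_Suc V1_orbit V2_orbit linear_simps)
  next
    case 2
    then show ?thesis
      by (simp add: defect_op_apply adj1_orbit_Suc adj2_orbit_Suc_0 V1_orbit V2_orbit linear_simps)
  qed
next
  case False
  then obtain m' n' where "m = Suc m'" "n = Suc n'"
    by (metis not0_implies_Suc)
  then have "orbit m n = V1 (V2 (orbit m' n'))"
    by (simp add: V1_orbit V2_orbit)
  then show ?thesis
    by (simp add: defect_op_V1_V2)
qed

lemma cmod_beta_le_1: "cmod \<beta> \<le> 1"
proof -
  have "cmod \<beta> = cmod (cinner (V2 f) (V1 f))"
    by (simp add: cinner_first_orbit)
  also have "\<dots> \<le> norm (V2 f) * norm (V1 f)"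
    by (rule cmod_cinner_le)
  finally show ?thesis
    by (simp add: norm_isometry[OF isometry_V1] norm_isometry[OF isometry_V2] norm_f)
qed

end

section \<open>Irreducible pairs\<close>

locale irreducible_eigenvector_pair = eigenvector_pair +
  assumes irreducible: "irreducible_pair V1 V2"
begin

text \<open>The closed span of the orbit reduces the pair, because the adjoints map orbit vectors to
  multiples of orbit vectors; by irreducibility it is everything.\<close>
lemma closure_span_orbit: "closure (cvs.span (range (case_prod orbit))) = UNIV"
proof -
  define M where "M = closure (cvs.span (range (case_prod orbit)))"
  have orbit_in_span: "orbit m n \<in> cvs.span (range (case_prod orbit))" for m n
    by (rule cvs.span_base) (metis case_prod_conv rangeI)
  have invariant: "T ` M \<subseteq> M"
    if "bounded_linear T" "clinear T" "\<And>m n. T (orbit m n) \<in> cvs.span (range (case_prod orbit))"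
    for T
    unfolding M_def using that by (intro closure_span_invariant) auto
  have "V1 ` M \<subseteq> M" "V2 ` M \<subseteq> M"
    by (rule invariant; simp add: bounded_linear_isometry clinear_isometry isometry_V1 isometry_V2
        V1_orbit V2_orbit orbit_in_span)+
  moreover have "adj V1 ` M \<subseteq> M"
  proof (rule invariant)
    show "adj V1 (orbit m n) \<in> cvs.span (range (case_prod orbit))" for m n
      by (cases m; cases n)
        (simp_all add: adj1_f adj1_orbit_Suc adj1_orbit_0_Suc orbit_in_span cvs.span_zero
          cvs.span_scale)
  qed (simp_all add: bounded_linear_adj_isometry clinear_adj_isometry isometry_V1)
  moreover have "adj V2 ` M \<subseteq> M"
  proof (rule invariant)
    show "adj V2 (orbit m n) \<in> cvs.span (range (case_prod orbit))" for m n
      by (cases m; cases n)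
        (simp_all add: adj2_f adj2_orbit_Suc adj2_orbit_Suc_0 orbit_in_span cvs.span_zero
          cvs.span_scale)
  qed (simp_all add: bounded_linear_adj_isometry clinear_adj_isometry isometry_V2)
  moreover have "cvs.subspace M" "closed M"
    unfolding M_def by (simp_all add: csubspace_closure)
  ultimately have "M = {0} \<or> M = UNIV"
    using irreducible unfolding irreducible_pair_def by blast
  moreover have "f \<in> M"
    unfolding M_def using orbit_in_span[of 0 0] closure_subset by auto
  ultimately have "M = UNIV"
    using norm_f by auto
  then show ?thesis
    by (simp add: M_def)
qed

lemma eq_0_if_orthogonal_orbit:
  assumes "\<And>m n. cinner (orbit m n) w = 0"
  shows "w = 0"
proof -
  define Z where "Z = {x. cinner x w = 0}"
  have "closed Z"
    unfolding Z_def
    by (rule closed_Collect_eq) (simp_all add: linear_continuous_on[OF bounded_linear_cinner_left])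
  moreover have "cvs.span (range (case_prod orbit)) \<subseteq> Z"
  proof
    fix x
    assume "x \<in> cvs.span (range (case_prod orbit))"
    then show "x \<in> Z"
    proof (induction rule: cvs.span_induct)
      case base
      then show ?case
        by (rule cvs.subspaceI) (simp_all add: Z_def cinner_add_left cinner_scaleC_left)
    qed (use assms in \<open>auto simp: Z_def\<close>)
  qed
  ultimately have "w \<in> Z"
    using closure_span_orbit closure_minimal by blast
  then show ?thesis
    by (simp add: Z_def cinner_eq_zero_iff)
qed

lemma defect_op_eqI:
  assumes self_adjoint: "\<And>x y. cinner (S x) y = cinner x (S y)"
    and orbit: "\<And>m n. C (orbit m n) = S (orbit m n)"
  shows "C y = S y"
proof -
  have "C y - S y = 0"
    by (rule eq_0_if_orthogonal_orbit)
      (simp add: cinner_diff_right cinner_defect_op[symmetric] self_adjoint[symmetric] orbit)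
  then show ?thesis
    by simp
qed

lemma orbit_cases [case_names origin first second high]:
  assumes "P 0 0" "P (Suc 0) 0" "P 0 (Suc 0)" "\<And>m n. 2 \<le> m + n \<Longrightarrow> P m n"
  shows "P m n"
proof (cases "2 \<le> m + n")
  case False
  then consider "m = 0" "n = 0" | "m = Suc 0" "n = 0" | "m = 0" "n = Suc 0"
    by (cases m; cases n) simp_all
  then show ?thesis
    by cases (use assms in simp_all)
qed (rule assms(4))

text \<open>If \<open>\<beta> = 0\<close>, the defect operator is the projection onto \<open>f\<close>; if \<open>|\<beta>| = 1\<close>, then
  \<open>V\<^sub>1 f = \<beta> V\<^sub>2 f\<close> (equality in Cauchy-Schwarz) and it is \<open>P\<^sub>f - P\<^bsub>V\<^sub>2 f\<^esub>\<close>.\<close>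

lemma op_rank_defect_op_le_1_if_beta_eq_0:
  assumes "\<beta> = 0"
  shows "op_rank C \<le> 1"
proof -
  have "C y = spectral_sum [(1, f)] y" for y
  proof (rule defect_op_eqI)
    show "C (orbit m n) = spectral_sum [(1, f)] (orbit m n)" for m n
      by (induction m n rule: orbit_cases)
        (simp_all add: assms defect_op_f cinner_f_f defect_op_V1_f defect_op_V2_f cinner_first_orbit
          defect_op_orbit_high cinner_first_orbit_high)
  qed (rule cinner_spectral_sum)
  then have "C = spectral_sum [(1, f)]"
    by (rule ext)
  then show ?thesis
    using op_rank_spectral_sum_le[of "[(1, f)]"] by simp
qed

lemma op_rank_defect_op_le_2_if_norm_beta_eq_1:
  assumes "cmod \<beta> = 1"
  shows "op_rank C \<le> 2"
proof -
  have \<beta>: "\<beta> * cnj \<beta> = 1"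
    using assms complex_norm_square[of \<beta>] by simp
  have "(norm (V1 f - \<beta> *\<^sub>C V2 f))\<^sup>2 = 0"
    by (simp add: power2_norm_diff_cinner norm_scaleC assms cinner_scaleC_right cinner_first_orbit
        norm_isometry[OF isometry_V1] norm_isometry[OF isometry_V2] norm_f \<beta>)
  then have V1_f: "V1 f = \<beta> *\<^sub>C V2 f"
    by simp
  define L where "L = [(1::real, f), (-1, V2 f)]"
  have "C y = spectral_sum L y" for y
  proof (rule defect_op_eqI)
    show "C (orbit m n) = spectral_sum L (orbit m n)" for m n
    proof (induction m n rule: orbit_cases)
      case second
      have "C (V2 f) = - V2 f"
        by (simp add: defect_op_V2_f V1_f mult.commute \<beta>)
      then show ?case
        by (simp add: L_def cinner_first_orbit)
    qed (simp_all add: L_def defect_op_f cinner_f_f defect_op_V1_f cinner_first_orbit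
        defect_op_orbit_high cinner_first_orbit_high)
  qed (rule cinner_spectral_sum)
  then have "C = spectral_sum L"
    by (rule ext)
  then show ?thesis
    using op_rank_spectral_sum_le[of L] by (simp add: L_def)
qed

end

section \<open>The case \<open>0 < |\<beta>| < 1\<close>\<close>

locale generic_eigenvector_pair = irreducible_eigenvector_pair +
  assumes norm_beta_pos: "0 < cmod \<beta>" and norm_beta_lt_1: "cmod \<beta> < 1"
begin

lemma beta_nonzero: "\<beta> \<noteq> 0"
  using norm_beta_pos by auto

lemma sgn_beta:
  "cnj (sgn \<beta>) * \<beta> = complex_of_real (cmod \<beta>)"
  "complex_of_real (cmod \<beta>) * cnj (sgn \<beta>) = cnj \<beta>"
  "sgn \<beta> * cnj (sgn \<beta>) = 1"
proof -
  have "cnj \<beta> * \<beta> = complex_of_real ((cmod \<beta>)\<^sup>2)"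
    by (metis complex_norm_square mult.commute)
  then show "cnj (sgn \<beta>) * \<beta> = complex_of_real (cmod \<beta>)"
    using norm_beta_pos by (simp add: sgn_eq power2_eq_square)
  show "complex_of_real (cmod \<beta>) * cnj (sgn \<beta>) = cnj \<beta>"
    using norm_beta_pos by (simp add: sgn_eq)
  show "sgn \<beta> * cnj (sgn \<beta>) = 1"
    using beta_nonzero by (metis complex_norm_square norm_sgn of_real_1 power_one)
qed

text \<open>On the span of \<open>V\<^sub>1 f\<close> and \<open>V\<^sub>2 f\<close> the defect operator swaps the two vectors up to the
  factors \<open>-\<beta>\<close> and \<open>-\<beta>\<^sup>*\<close>; its eigenvectors there are:\<close>
definition w1 :: 'a where "w1 = V2 f - cnj (sgn \<beta>) *\<^sub>C V1 f"
definition w2 :: 'a where "w2 = V2 f + cnj (sgn \<beta>) *\<^sub>C V1 f"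

lemma defect_op_w1: "C w1 = complex_of_real (cmod \<beta>) *\<^sub>C w1"
proof -
  have "C w1 = (cnj (sgn \<beta>) * \<beta>) *\<^sub>C V2 f - cnj \<beta> *\<^sub>C V1 f"
    by (simp add: w1_def clinear_simps[OF clinear_defect_op] defect_op_V1_f defect_op_V2_f)
  also have "\<dots> = complex_of_real (cmod \<beta>) *\<^sub>C w1"
    by (simp add: w1_def sgn_beta cvs.scale_right_diff_distrib)
  finally show ?thesis .
qed

lemma defect_op_w2: "C w2 = complex_of_real (- cmod \<beta>) *\<^sub>C w2"
proof -
  have "C w2 = - (cnj (sgn \<beta>) * \<beta>) *\<^sub>C V2 f - cnj \<beta> *\<^sub>C V1 f"
    by (simp add: w2_def clinear_simps[OF clinear_defect_op] defect_op_V1_f defect_op_V2_f)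
  also have "\<dots> = complex_of_real (- cmod \<beta>) *\<^sub>C w2"
    by (simp add: w2_def sgn_beta scaleC_add_right)
  finally show ?thesis .
qed

lemma power2_norm_w1: "(norm w1)\<^sup>2 = 2 - 2 * cmod \<beta>"
  and power2_norm_w2: "(norm w2)\<^sup>2 = 2 + 2 * cmod \<beta>"
  using beta_nonzero
  by (simp_all add: w1_def w2_def power2_norm_diff_cinner power2_norm_add_cinner norm_scaleC
      norm_sgn cinner_scaleC_right cinner_first_orbit sgn_beta norm_isometry[OF isometry_V1]
      norm_isometry[OF isometry_V2] norm_f)

lemma w1_nonzero: "w1 \<noteq> 0" and w2_nonzero: "w2 \<noteq> 0"
proof -
  have "(norm w1)\<^sup>2 > 0" "(norm w2)\<^sup>2 > 0"
    using power2_norm_w1 power2_norm_w2 norm_beta_pos norm_beta_lt_1 by linarith+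
  then show "w1 \<noteq> 0" "w2 \<noteq> 0"
    by auto
qed

definition u1 :: 'a where "u1 = sgn w1"
definition u2 :: 'a where "u2 = sgn w2"

lemma defect_op_u1: "C u1 = complex_of_real (cmod \<beta>) *\<^sub>C u1"
  and defect_op_u2: "C u2 = complex_of_real (- cmod \<beta>) *\<^sub>C u2"
  unfolding u1_def u2_def
  by (simp_all only: eigenvector_sgn_iff[OF clinear_defect_op w1_nonzero] defect_op_w1
      eigenvector_sgn_iff[OF clinear_defect_op w2_nonzero] defect_op_w2)

sublocale triple: orthonormal_triple f u1 u2
proof
  have C_f: "C f = complex_of_real 1 *\<^sub>C f"
    by (simp add: defect_op_f)
  show "cinner f f = 1"
    by (rule cinner_f_f)
  show "cinner u1 u1 = 1" "cinner u2 u2 = 1"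
    using w1_nonzero w2_nonzero by (simp_all add: u1_def u2_def cinner_self norm_sgn)
  show "cinner f u1 = 0"
    using norm_beta_lt_1
    by (intro cinner_eq_0_if_distinct_eigenvalues[OF cinner_defect_op C_f defect_op_u1]) simp
  show "cinner f u2 = 0"
    using norm_beta_pos
    by (intro cinner_eq_0_if_distinct_eigenvalues[OF cinner_defect_op C_f defect_op_u2]) linarith
  show "cinner u1 u2 = 0"
    using norm_beta_pos
    by (intro cinner_eq_0_if_distinct_eigenvalues[OF cinner_defect_op defect_op_u1 defect_op_u2]) simp
qed

lemma V2_f_eq: "V2 f = (1/2) *\<^sub>R (w1 + w2)"
proof -
  have "w1 + w2 = 2 *\<^sub>R V2 f"
    by (simp add: w1_def w2_def scaleR_2)
  then show ?thesis
    by simp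
qed

lemma V1_f_eq: "V1 f = (1/2) *\<^sub>R (sgn \<beta> *\<^sub>C (w2 - w1))"
proof -
  have "sgn \<beta> *\<^sub>C (w2 - w1) = 2 *\<^sub>R V1 f"
    by (simp add: w1_def w2_def scaleR_2 sgn_beta flip: scaleC_add_right)
  then show ?thesis
    by simp
qed

lemma cinner_u_orbit_high:
  assumes "2 \<le> m + n"
  shows "cinner u1 (orbit m n) = 0" "cinner u2 (orbit m n) = 0"
proof -
  have "cinner w1 (orbit m n) = 0" "cinner w2 (orbit m n) = 0"
    using assms by (simp_all add: w1_def w2_def cinner_simps cinner_first_orbit_high)
  then show "cinner u1 (orbit m n) = 0" "cinner u2 (orbit m n) = 0"
    by (simp_all add: u1_def u2_def sgn_div_norm cinner_scaleR_left)
qed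

lemma diag_op_w1: "triple.diag_op 1 (cmod \<beta>) (- cmod \<beta>) w1 = complex_of_real (cmod \<beta>) *\<^sub>C w1"
  and diag_op_w2: "triple.diag_op 1 (cmod \<beta>) (- cmod \<beta>) w2 = complex_of_real (- cmod \<beta>) *\<^sub>C w2"
  using triple.diag_op_basis(2,3)[of 1 "cmod \<beta>" "- cmod \<beta>"]
  by (simp_all only: eigenvector_sgn_iff[OF triple.clinear_diag_op w1_nonzero, folded u1_def]
      eigenvector_sgn_iff[OF triple.clinear_diag_op w2_nonzero, folded u2_def])

text \<open>Both operators are self-adjoint and agree on the orbit: on \<open>V\<^sub>1 f\<close> and \<open>V\<^sub>2 f\<close> because
  these lie in the span of the common eigenvectors \<open>w\<^sub>1, w\<^sub>2\<close>.\<close>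
lemma defect_op_eq_diag_op: "C = triple.diag_op 1 (cmod \<beta>) (- cmod \<beta>)"
proof
  let ?D = "triple.diag_op 1 (cmod \<beta>) (- cmod \<beta>)"
  have agree: "C w1 = ?D w1" "C w2 = ?D w2"
    by (simp_all only: defect_op_w1 defect_op_w2 diag_op_w1 diag_op_w2)
  note lin = clinear_simps[OF clinear_defect_op] clinear_simps[OF triple.clinear_diag_op]
  show "C y = ?D y" for y
  proof (rule defect_op_eqI)
    show "C (orbit m n) = ?D (orbit m n)" for m n
    proof (induction m n rule: orbit_cases)
      case origin
      then show ?case
        by (simp add: defect_op_f triple.diag_op_basis)
    next
      case first
      then show ?case
        by (simp only: orbit_1_0 V1_f_eq lin agree)
    next
      case second
      then show ?case
        by (simp only: orbit_0_1 V2_f_eq lin agree)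
    next
      case (high m n)
      then show ?case
        by (simp add: defect_op_orbit_high triple.diag_op_apply cinner_first_orbit_high
            cinner_u_orbit_high)
    qed
  qed (rule triple.cinner_diag_op)
qed

lemma op_spectrum_defect_op:
  "op_spectrum C \<inter> complex_of_real ` {0<..<1} = {complex_of_real (cmod \<beta>)}"
proof -
  have "complex_of_real \<mu> \<in> op_spectrum C \<longleftrightarrow> \<mu> = cmod \<beta>" if "0 < \<mu>" "\<mu> < 1" for \<mu>
  proof -
    have "\<mu> \<noteq> 0" "\<mu> \<noteq> 1" "\<mu> \<noteq> - cmod \<beta>"
      using that norm_beta_pos by auto
    then show ?thesis
      by (simp add: defect_op_eq_diag_op triple.in_op_spectrum_diag_op_iff)
  qed
  then have "{\<mu> \<in> {0<..<1}. complex_of_real \<mu> \<in> op_spectrum C} = {cmod \<beta>}"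
    using norm_beta_pos norm_beta_lt_1 by auto
  moreover have "op_spectrum C \<inter> complex_of_real ` {0<..<1}
      = complex_of_real ` {\<mu> \<in> {0<..<1}. complex_of_real \<mu> \<in> op_spectrum C}"
    by auto
  ultimately show ?thesis
    by simp
qed

lemma unitarily_equiv_restr_defect_op:
  "unitarily_equiv_restr C (orth_compl (op_kernel C))
    (diag3 1 (complex_of_real (cmod \<beta>)) (- complex_of_real (cmod \<beta>)))"
  using triple.unitarily_equiv_restr_diag_op[of 1 "cmod \<beta>" "- cmod \<beta>"] norm_beta_pos
  by (simp add: defect_op_eq_diag_op)

lemma E_sp_1: "E_sp V1 V2 1 = range (\<lambda>c. c *\<^sub>C f)"
  using triple.eigsp_diag_op_first[of 1 "cmod \<beta>" "- cmod \<beta>"] norm_beta_pos norm_beta_lt_1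
  by (simp add: E_sp_def defect_op_eq_diag_op)

lemma E_sp_minus_1: "E_sp V1 V2 (- 1) = {0}"
proof -
  have "- 1 \<noteq> cmod \<beta>" "- 1 \<noteq> - cmod \<beta>"
    using norm_beta_pos norm_beta_lt_1 by linarith+
  then show ?thesis
    using triple.eigsp_diag_op_trivial[of "- 1" 1 "cmod \<beta>" "- cmod \<beta>"]
    by (simp add: E_sp_def defect_op_eq_diag_op complex_eq_iff)
qed

lemma range_cross_comm: "range X = E_sp V1 V2 1"
proof
  show "range X \<subseteq> E_sp V1 V2 1"
    by (auto simp: E_sp_def eigsp_def defect_op_cross_comm)
  show "E_sp V1 V2 1 \<subseteq> range X"
  proof
    fix y
    assume "y \<in> E_sp V1 V2 1"
    then obtain c where "y = c *\<^sub>C f"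
      by (auto simp: E_sp_1)
    moreover have "X ((c / \<beta>) *\<^sub>C f) = c *\<^sub>C f"
      using beta_nonzero by (simp add: clinear_scaleC[OF clinear_cross_comm] cross_comm_f)
    ultimately show "y \<in> range X"
      by (metis rangeI)
  qed
qed

lemma op_rank_cross_comm: "op_rank X = 1"
proof -
  have "range X = cvs.span {f}"
    by (simp add: range_cross_comm E_sp_1 cvs.span_singleton)
  moreover have "cvs.dim {f} = 1"
    using norm_f by (subst cvs.dim_eq_card_independent) auto
  ultimately show ?thesis
    by (simp add: op_rank_def)
qed

lemma cross_comm_eigenvalue_unique:
  assumes "f' \<in> E_sp V1 V2 1" "f' \<noteq> 0" "X f' = \<beta>' *\<^sub>C f'"
  shows "\<beta>' = \<beta>"
proof -
  obtain c where "f' = c *\<^sub>C f"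
    using assms(1) by (auto simp: E_sp_1)
  then have "X f' = \<beta> *\<^sub>C f'"
    by (simp add: clinear_scaleC[OF clinear_cross_comm] cross_comm_f mult.commute)
  with assms(2,3) show ?thesis
    by (metis cvs.scale_cancel_right)
qed

lemma unit_eigenvector_in_E_sp_1_iff:
  "(\<beta>' \<noteq> 0 \<and> (\<exists>f'. f' \<in> E_sp V1 V2 1 \<and> norm f' = 1
      \<and> E_sp V1 V2 1 = range (\<lambda>c. c *\<^sub>C f') \<and> X f' = \<beta>' *\<^sub>C f')) \<longleftrightarrow> \<beta>' = \<beta>"
proof
  assume "\<beta>' \<noteq> 0 \<and> (\<exists>f'. f' \<in> E_sp V1 V2 1 \<and> norm f' = 1
      \<and> E_sp V1 V2 1 = range (\<lambda>c. c *\<^sub>C f') \<and> X f' = \<beta>' *\<^sub>C f')"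
  then obtain f' where "f' \<in> E_sp V1 V2 1" "norm f' = 1" "X f' = \<beta>' *\<^sub>C f'"
    by blast
  then show "\<beta>' = \<beta>"
    using cross_comm_eigenvalue_unique by force
next
  have "f \<in> E_sp V1 V2 1"
    by (simp add: E_sp_1 range_eqI[of _ _ 1])
  then show "\<beta>' \<noteq> 0 \<and> (\<exists>f'. f' \<in> E_sp V1 V2 1 \<and> norm f' = 1
      \<and> E_sp V1 V2 1 = range (\<lambda>c. c *\<^sub>C f') \<and> X f' = \<beta>' *\<^sub>C f')" if "\<beta>' = \<beta>"
    using that beta_nonzero norm_f E_sp_1 cross_comm_f by blast
qed

lemma spectral_data_iff:
  "(0 < lam \<and> lam < 1
      \<and> op_spectrum C \<inter> complex_of_real ` {0<..<1} = {complex_of_real lam}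
      \<and> unitarily_equiv_restr C (orth_compl (op_kernel C))
          (diag3 1 (complex_of_real lam) (- complex_of_real lam)))
    \<longleftrightarrow> lam = cmod \<beta>"
  using norm_beta_pos norm_beta_lt_1 op_spectrum_defect_op unitarily_equiv_restr_defect_op by auto

end

theorem theorem4p9:
  fixes V1 V2 :: "'a::chilbert \<Rightarrow> 'a"
  assumes "separable_space TYPE('a)"
    and "three_finite_pair V1 V2"
    and "irreducible_pair V1 V2"
  shows "(op_rank (cross_comm V1 V2) = 1 \<and> range (cross_comm V1 V2) = E_sp V1 V2 1)
    \<and> E_sp V1 V2 (-1) = {0}
    \<and> (\<exists>!\<beta>::complex. \<beta> \<noteq> 0 \<and> (\<exists>f. f \<in> E_sp V1 V2 1 \<and> norm f = 1
           \<and> E_sp V1 V2 1 = range (\<lambda>c. c *\<^sub>C f) \<and> cross_comm V1 V2 f = \<beta> *\<^sub>C f))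
    \<and> (\<exists>!lam::real. 0 < lam \<and> lam < 1
           \<and> op_spectrum (defect_op V1 V2) \<inter> complex_of_real ` {0<..<1} = {complex_of_real lam}
           \<and> unitarily_equiv_restr (defect_op V1 V2) (orth_compl (op_kernel (defect_op V1 V2)))
                (diag3 1 (complex_of_real lam) (- complex_of_real lam)))
    \<and> (\<forall>(\<beta>::complex) (lam::real).
           (\<beta> \<noteq> 0 \<and> (\<exists>f. f \<in> E_sp V1 V2 1 \<and> norm f = 1
              \<and> E_sp V1 V2 1 = range (\<lambda>c. c *\<^sub>C f) \<and> cross_comm V1 V2 f = \<beta> *\<^sub>C f))
         \<longrightarrow> (0 < lam \<and> lam < 1
           \<and> op_spectrum (defect_op V1 V2) \<inter> complex_of_real ` {0<..<1} = {complex_of_real lam}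
           \<and> unitarily_equiv_restr (defect_op V1 V2) (orth_compl (op_kernel (defect_op V1 V2)))
                (diag3 1 (complex_of_real lam) (- complex_of_real lam)))
         \<longrightarrow> cmod \<beta> = lam)"
proof -
  from assms(2) have "isometric_pair V1 V2" "normal_op (cross_comm V1 V2)"
    and rank: "op_rank (defect_op V1 V2) = 3"
    by (simp_all add: three_finite_pair_def compact_normal_pair_def BCL_pair_def)
  then interpret normal_commuting_isometries V1 V2
    by unfold_locales
  obtain f \<beta> where "norm f = 1" "adj V1 f = 0" "adj V2 f = 0" "X f = \<beta> *\<^sub>C f"
    using exists_fixed_eigenvector rank by auto
  with assms(3) interpret irreducible_eigenvector_pair V1 V2 f \<beta>
    by unfold_locales
  have "0 < cmod \<beta>" "cmod \<beta> < 1"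
    using op_rank_defect_op_le_1_if_beta_eq_0 op_rank_defect_op_le_2_if_norm_beta_eq_1
      cmod_beta_le_1 rank by force+
  then interpret generic_eigenvector_pair V1 V2 f \<beta>
    by unfold_locales
  show ?thesis
    using op_rank_cross_comm range_cross_comm E_sp_minus_1 unit_eigenvector_in_E_sp_1_iff
      spectral_data_iff by auto
qed

end
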